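(* The ascending-price auction $G^*$ (defined in the context) is an incentive compatible gradual mechanism implementing the second-price auction rule.
   Context: General framework. Agents $N$ with finite type spaces $\Theta_i$, types inducing complete transitive preferences $R(\theta_i)$ over outcomes; an SCF $f$ maps type profiles to outcomes. A gradual mechanism (GM) implementing $f$ is a finite extensive game form with perfect recall (possibly simultaneous moves, all agents active at the initial history, information sets partitioning each agent's decision nodes, outcome function on terminal histories) in which each action of agent $i$ is a nonempty subset of $\Theta_i$, at each decision node of $i$ the available actions are pairwise disjoint with union equal to the last action of $i$ taken before (or $\Theta_i$ if none), and each terminal history $z$ receives outcome $f(\theta)$ for any $\theta$ in the product $\Theta(z)$ of the agents' last actions along $z$. A strategy $s_i$ is unconditional for $\theta_i$ if it chooses the action containing $\theta_i$ at every decision node of $i$ whose current report contains $\theta_i$. The GM is incentive compatible if for every agent $i$, type $\theta_i$, unconditional strategy $s_{\theta_i}$, strategy $s_i$ and profile $s_{-i}$ of others' strategies, the outcome under $(s_{\theta_i},s_{-i})$ is weakly preferred under $R(\theta_i)$ to that under $(s_i,s_{-i})$. Auction environment. Bidders $N=\{1,\dots,n\}$ ($n\ge2$), each with private value $v_i\in V=\{1,\dots,m\}$ ($m\ge2$), so $\Theta_i=V$. An outcome is a probability distribution over which bidder receives the item together with the price the winner pays; bidder $i$ with value $v_i$ ranks outcomes by expected payoff (probability of winning times $v_i$ minus the price paid upon winning). The second-price auction rule assigns to each value profile $v$ the outcome in which the item goes, with equal probability, to one of the bidders with the highest value, who pays the second-highest entry of $v$ (which equals the highest value if there is a tie at the top).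 Ascending-price auction $G^*$. Price levels $p=1,2,\dots$. At price $p=1$ all bidders are active; at price $p\ge2$ the active bidders are those who chose to stay at $p-1$. At price $p\le m-1$, active bidders move one at a time in increasing index order; each chooses "stay", i.e. the action $\{v\in V:v>p\}$, or "leave", i.e. $\{v\in V:v=p\}$ (their current report is $\{p,\dots,m\}$). After all active bidders have moved at $p$: if exactly one stayed, she wins and pays $p$; if none stayed, a uniformly random bidder among those who left at $p$ wins and pays $p$; if at least two stayed and $p<m-1$, the price rises to $p+1$; if at least two stayed and $p=m-1$, the price reaches $m$, the auction stops, and a uniformly random bidder among those who stayed at $m-1$ wins and pays $m$. Information: when bidder $i$ moves at price $p$, she knows all choices made at all earlier price levels; as to the choices of the bidders who moved before her at price $p$: if at least two of them stayed, she knows exactly their choices; otherwise she knows only that at most one of them stayed. That is, an information set of $i$ is a singleton unless it contains a history in which fewer than two earlier movers at price $p$ stayed, in which case it consists of all histories that coincide with it at all previous price levels and in which fewer than two earlier movers at price $p$ stayed. *)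

theory Defs
  imports "HOL-Probability.Probability_Mass_Function"
begin

text \<open>A history is a finite list of moves; a move is a partial profile of actions
(the agents active at that node each choose an action; an action of agent i is a
set of types of i).\<close>

type_synonym ('i, 't) move = "'i \<Rightarrow> 't set option"
type_synonym ('i, 't) history = "('i, 't) move list"

record ('i, 't, 'o) gform =
  hist :: "('i, 't) history set"
  info :: "'i \<Rightarrow> ('i, 't) history \<Rightarrow> ('i, 't) history set"
  outc :: "('i, 't) history \<Rightarrow> 'o"

definition terminal :: "('i, 't, 'o) gform \<Rightarrow> ('i, 't) history \<Rightarrow> bool" where
  "terminal G h \<longleftrightarrow> h \<in> hist G \<and> (\<forall>a. h @ [a] \<notin> hist G)"

definition active :: "('i, 't, 'o) gform \<Rightarrow> ('i, 't) history \<Rightarrow> 'i set" where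
  "active G h = {i. \<exists>a x. h @ [a] \<in> hist G \<and> a i = Some x}"

definition avail :: "('i, 't, 'o) gform \<Rightarrow> 'i \<Rightarrow> ('i, 't) history \<Rightarrow> 't set set" where
  "avail G i h = {x. \<exists>a. h @ [a] \<in> hist G \<and> a i = Some x}"

definition dnodes :: "('i, 't, 'o) gform \<Rightarrow> 'i \<Rightarrow> ('i, 't) history set" where
  "dnodes G i = {h \<in> hist G. i \<in> active G h}"

definition report :: "('i \<Rightarrow> 't set) \<Rightarrow> 'i \<Rightarrow> ('i, 't) history \<Rightarrow> 't set" where
  "report \<Theta> i h = foldl (\<lambda>r a. case a i of Some x \<Rightarrow> x | None \<Rightarrow> r) (\<Theta> i) h"

text \<open>Experience of agent i along h (information sets visited and actions taken),
used to express perfect recall.\<close>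
definition experience ::
  "('i, 't, 'o) gform \<Rightarrow> 'i \<Rightarrow> ('i, 't) history \<Rightarrow> (('i, 't) history set \<times> 't set option) list" where
  "experience G i h =
     map (\<lambda>k. (info G i (take k h), (h ! k) i)) (filter (\<lambda>k. (h ! k) i \<noteq> None) [0..<length h])"

definition extensive_form :: "'i set \<Rightarrow> ('i, 't, 'o) gform \<Rightarrow> bool" where
  "extensive_form N G \<longleftrightarrow>
     finite (hist G) \<and> [] \<in> hist G \<and>
     (\<forall>h a. h @ [a] \<in> hist G \<longrightarrow> h \<in> hist G) \<and>
     (\<forall>h \<in> hist G. \<not> terminal G h \<longrightarrow>
        active G h \<noteq> {} \<and> active G h \<subseteq> N \<and>
        (\<forall>a. h @ [a] \<in> hist G \<longleftrightarrow>
              (\<forall>i. (i \<in> active G h \<longrightarrow> (\<exists>x \<in> avail G i h. a i = Some x)) \<and>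
                   (i \<notin> active G h \<longrightarrow> a i = None)))) \<and>
     \<not> terminal G [] \<and> active G [] = N \<and>
     (\<forall>i. \<forall>h \<in> dnodes G i.
        h \<in> info G i h \<and> info G i h \<subseteq> dnodes G i \<and>
        (\<forall>h' \<in> info G i h. info G i h' = info G i h \<and> avail G i h' = avail G i h)) \<and>
     (\<forall>i. \<forall>h \<in> dnodes G i. \<forall>h' \<in> info G i h. experience G i h' = experience G i h)"

definition gradual :: "('i \<Rightarrow> 't set) \<Rightarrow> 'i set \<Rightarrow> ('i, 't, 'o) gform \<Rightarrow> bool" where
  "gradual \<Theta> N G \<longleftrightarrow>
     (\<forall>i \<in> N. \<forall>h \<in> dnodes G i.
        (\<forall>x \<in> avail G i h. x \<noteq> {} \<and> x \<subseteq> \<Theta> i) \<and>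
        (\<forall>x \<in> avail G i h. \<forall>y \<in> avail G i h. x \<noteq> y \<longrightarrow> x \<inter> y = {}) \<and>
        \<Union>(avail G i h) = report \<Theta> i h)"

definition implements ::
  "('i \<Rightarrow> 't set) \<Rightarrow> 'i set \<Rightarrow> (('i \<Rightarrow> 't) \<Rightarrow> 'o) \<Rightarrow> ('i, 't, 'o) gform \<Rightarrow> bool" where
  "implements \<Theta> N f G \<longleftrightarrow>
     (\<forall>z. terminal G z \<longrightarrow> (\<forall>\<theta>. (\<forall>i \<in> N. \<theta> i \<in> report \<Theta> i z) \<longrightarrow> outc G z = f \<theta>))"

definition gradual_mechanism ::
  "('i \<Rightarrow> 't set) \<Rightarrow> 'i set \<Rightarrow> (('i \<Rightarrow> 't) \<Rightarrow> 'o) \<Rightarrow> ('i, 't, 'o) gform \<Rightarrow> bool" where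
  "gradual_mechanism \<Theta> N f G \<longleftrightarrow> extensive_form N G \<and> gradual \<Theta> N G \<and> implements \<Theta> N f G"

definition strategy :: "('i, 't, 'o) gform \<Rightarrow> 'i \<Rightarrow> (('i, 't) history \<Rightarrow> 't set) \<Rightarrow> bool" where
  "strategy G i s \<longleftrightarrow>
     (\<forall>h \<in> dnodes G i. s h \<in> avail G i h \<and> (\<forall>h' \<in> info G i h. s h' = s h))"

definition consistent ::
  "('i, 't, 'o) gform \<Rightarrow> ('i \<Rightarrow> ('i, 't) history \<Rightarrow> 't set) \<Rightarrow> ('i, 't) history \<Rightarrow> bool" where
  "consistent G s z \<longleftrightarrow>
     (\<forall>k < length z. z ! k =
        (\<lambda>i. if i \<in> active G (take k z) then Some (s i (take k z)) else None))"

definition play :: "('i, 't, 'o) gform \<Rightarrow> ('i \<Rightarrow> ('i, 't) history \<Rightarrow> 't set) \<Rightarrow> 'o" where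
  "play G s = outc G (THE z. terminal G z \<and> consistent G s z)"

definition unconditional ::
  "('i \<Rightarrow> 't set) \<Rightarrow> ('i, 't, 'o) gform \<Rightarrow> 'i \<Rightarrow> 't \<Rightarrow> (('i, 't) history \<Rightarrow> 't set) \<Rightarrow> bool" where
  "unconditional \<Theta> G i \<theta> s \<longleftrightarrow> (\<forall>h \<in> dnodes G i. \<theta> \<in> report \<Theta> i h \<longrightarrow> \<theta> \<in> s h)"

text \<open>\<open>R i \<theta> x y\<close>: outcome x is weakly preferred to y by agent i of type \<theta>.\<close>
definition incentive_compatible ::
  "('i \<Rightarrow> 't set) \<Rightarrow> 'i set \<Rightarrow> ('i \<Rightarrow> 't \<Rightarrow> 'o \<Rightarrow> 'o \<Rightarrow> bool) \<Rightarrow> ('i, 't, 'o) gform \<Rightarrow> bool" where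
  "incentive_compatible \<Theta> N R G \<longleftrightarrow>
     (\<forall>i \<in> N. \<forall>\<theta> \<in> \<Theta> i. \<forall>s\<theta> si s.
        strategy G i s\<theta> \<longrightarrow> unconditional \<Theta> G i \<theta> s\<theta> \<longrightarrow> strategy G i si \<longrightarrow>
        (\<forall>j \<in> N. strategy G j (s j)) \<longrightarrow>
        R i \<theta> (play G (s(i := s\<theta>))) (play G (s(i := si))))"

text \<open>Outcome: (distribution of the winner, price paid by the winner).\<close>
type_synonym aoutcome = "nat pmf \<times> nat"

definition auction_pref :: "nat \<Rightarrow> nat \<Rightarrow> aoutcome \<Rightarrow> aoutcome \<Rightarrow> bool" where
  "auction_pref i v x y \<longleftrightarrow>
     pmf (fst x) i * (real v - real (snd x)) \<ge> pmf (fst y) i * (real v - real (snd y))"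

definition second_price :: "nat \<Rightarrow> (nat \<Rightarrow> nat) \<Rightarrow> aoutcome" where
  "second_price n v =
     (pmf_of_set {i \<in> {1..n}. v i = Max (v ` {1..n})},
      rev (sort (map v [1..<Suc n])) ! 1)"

datatype gstate = Next nat nat nat \<comment> \<open>mover, price, start offset of current price level\<close>
  | Done "nat pmf" nat

text \<open>State after a sequence of stay(True)/leave(False) decisions, starting at
price p with active bidders A (in increasing order); off counts decisions made at
earlier price levels.\<close>
function lvl :: "nat \<Rightarrow> nat \<Rightarrow> nat \<Rightarrow> nat list \<Rightarrow> bool list \<Rightarrow> gstate" where
  "lvl m p off A bs =
    (if length bs < length A then Next (A ! length bs) p off
     else (let S = map fst (filter snd (zip A bs)); rest = drop (length A) bs in
       if length S = 1 then Done (return_pmf (hd S)) p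
       else if S = [] then Done (pmf_of_set (set A)) p
       else if Suc p < m then lvl m (Suc p) (off + length A) S rest
       else Done (pmf_of_set (set S)) m))"
  by pat_completeness auto
termination by (relation "Wellfounded.measure (\<lambda>(m, p, off, A, bs). m - p)") auto

definition gst :: "nat \<Rightarrow> nat \<Rightarrow> bool list \<Rightarrow> gstate" where
  "gst n m bs = lvl m 1 0 [1..<Suc n] bs"

definition gmove :: "nat \<Rightarrow> nat \<Rightarrow> bool list \<Rightarrow> nat \<Rightarrow> (nat, nat) move" where
  "gmove n m bs k =
     (case gst n m (take k bs) of
        Next i p off \<Rightarrow> (\<lambda>j. if j = i then Some (if bs ! k then {p<..m} else {p}) else None)
      | Done _ _ \<Rightarrow> (\<lambda>_. None))"

text \<open>Trivial initial simultaneous move (each bidder reports V), so that all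
agents are active at the initial history.\<close>
definition ginit :: "nat \<Rightarrow> nat \<Rightarrow> (nat, nat) move" where
  "ginit n m = (\<lambda>j. if j \<in> {1..n} then Some {1..m} else None)"

definition ghist :: "nat \<Rightarrow> nat \<Rightarrow> bool list \<Rightarrow> (nat, nat) history" where
  "ghist n m bs = ginit n m # map (gmove n m bs) [0..<length bs]"

definition gvalid :: "nat \<Rightarrow> nat \<Rightarrow> bool list \<Rightarrow> bool" where
  "gvalid n m bs \<longleftrightarrow> (\<forall>k < length bs. \<exists>i p off. gst n m (take k bs) = Next i p off)"

definition gdec :: "nat \<Rightarrow> nat \<Rightarrow> (nat, nat) history \<Rightarrow> bool list" where
  "gdec n m h = (SOME bs. gvalid n m bs \<and> ghist n m bs = h)"

definition nstay :: "bool list \<Rightarrow> nat" where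
  "nstay bs = length (filter id bs)"

definition Gstar_info :: "nat \<Rightarrow> nat \<Rightarrow> nat \<Rightarrow> (nat, nat) history \<Rightarrow> (nat, nat) history set" where
  "Gstar_info n m i h =
     (if h = [] then {[]} else
      (case gst n m (gdec n m h) of
         Next j p off \<Rightarrow>
           ghist n m ` {bs'. gvalid n m bs' \<and> gst n m bs' = Next i p off \<and>
              take off bs' = take off (gdec n m h) \<and>
              (if 2 \<le> nstay (drop off (gdec n m h))
               then drop off bs' = drop off (gdec n m h)
               else nstay (drop off bs') < 2)}
       | Done _ _ \<Rightarrow> {h}))"

definition Gstar_outc :: "nat \<Rightarrow> nat \<Rightarrow> (nat, nat) history \<Rightarrow> aoutcome" where
  "Gstar_outc n m h =
     (case gst n m (gdec n m h) of Done W p \<Rightarrow> (W, p) | Next _ _ _ \<Rightarrow> (return_pmf 0, 0))"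

definition Gstar :: "nat \<Rightarrow> nat \<Rightarrow> (nat, nat, aoutcome) gform" where
  "Gstar n m = \<lparr> hist = insert [] (ghist n m ` {bs. gvalid n m bs}),
                 info = Gstar_info n m,
                 outc = Gstar_outc n m \<rparr>"

end

(*
  Decisions in G* are stay/leave bits, so a history is encoded by the list of bits
  taken so far and the game becomes a deterministic state machine over such lists.
  Along every run, bidders still active at price p report {p..m} until they move and
  then {p<..m} or {p}, while eliminated bidders hold a singleton report below p.  At a
  terminal history these reports determine who has the highest value and what the
  second-highest value is, which gives implementation of the second-price rule.

  For incentive compatibility compare truthful play with a deviation, against the
  same strategies of the others, at their first difference: a decision of the
  deviator at some price p.  The deviation never pays less than p.  If it leaves at
  p < v and still wins, everybody else at price p left as well.  A bidder moving
  after the deviator at price p then sees at most one earlier stayer in either play,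
  so both plays lie in one of her information sets and she acts alike in them; hence
  truthful play wins alone at price p and earns v - p.
*)

theory Submission
  imports Defs
begin

declare lvl.simps[simp del]

definition profile_move ::
  "('i, 't, 'o) gform \<Rightarrow> ('i \<Rightarrow> ('i, 't) history \<Rightarrow> 't set) \<Rightarrow> ('i, 't) history \<Rightarrow> ('i, 't) move" where
  "profile_move G s h = (\<lambda>i. if i \<in> active G h then Some (s i h) else None)"

lemma consistent_iff_profile_move:
  "consistent G s z \<longleftrightarrow> (\<forall>k < length z. z ! k = profile_move G s (take k z))"
  by (simp add: consistent_def profile_move_def)

section \<open>Second-price outcomes\<close>

definition payoff :: "nat \<Rightarrow> nat \<Rightarrow> aoutcome \<Rightarrow> real" where
  "payoff i v x = pmf (fst x) i * (real v - real (snd x))"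

lemma auction_pref_iff_payoff: "auction_pref i v x y \<longleftrightarrow> payoff i v y \<le> payoff i v x"
  by (simp add: auction_pref_def payoff_def)

lemma fst_second_price: "fst (second_price n v) = pmf_of_set {k \<in> {1..n}. v k = Max (v ` {1..n})}"
  by (simp add: second_price_def)

lemma snd_second_price: "snd (second_price n v) = rev (sort (map v [1..<Suc n])) ! 1"
  by (simp add: second_price_def)

lemma second_price_ge:
  fixes v :: "nat \<Rightarrow> nat"
  assumes a: "a \<in> {1..n}" and b: "b \<in> {1..n}" "a \<noteq> b" and q: "q \<le> v a" "q \<le> v b"
  shows "q \<le> snd (second_price n v)"
proof (rule ccontr)
  define xs where "xs = map v [1..<Suc n]"
  define L where "L = sort xs"
  assume "\<not> q \<le> snd (second_price n v)"
  moreover have n2: "n \<ge> 2" using a b by auto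
  moreover have lL: "length L = n" by (simp add: L_def xs_def)
  ultimately have lt: "L ! (n - 2) < q"
    by (simp add: snd_second_price L_def xs_def rev_nth numeral_2_eq_2)
  have "{k. k < length L \<and> q \<le> L ! k} \<subseteq> {n - 1}"
  proof
    fix k assume k: "k \<in> {k. k < length L \<and> q \<le> L ! k}"
    have "\<not> k \<le> n - 2"
    proof
      assume "k \<le> n - 2"
      then have "L ! k \<le> L ! (n - 2)" using sorted_nth_mono[of L] lL n2 by (simp add: L_def)
      then show False using k lt by simp
    qed
    then show "k \<in> {n - 1}" using k lL by auto
  qed
  then have "card {k. k < length L \<and> q \<le> L ! k} \<le> 1"
    using card_mono[of "{n - 1}"] by fastforce
  moreover have "length (filter (\<lambda>x. q \<le> x) L) = length (filter (\<lambda>x. q \<le> x) xs)"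
    by (simp add: L_def filter_sort)
  ultimately have at_most_one: "length (filter (\<lambda>x. q \<le> x) xs) \<le> 1"
    by (simp add: length_filter_conv_card)
  have "{a - 1, b - 1} \<subseteq> {k. k < length xs \<and> q \<le> xs ! k}"
    using a b q by (auto simp: xs_def nth_map_upt simp del: upt_Suc)
  then have "card {a - 1, b - 1} \<le> card {k. k < length xs \<and> q \<le> xs ! k}" by (intro card_mono) auto
  moreover have "card {a - 1, b - 1} = 2" using a b by auto
  ultimately have "length (filter (\<lambda>x. q \<le> x) xs) \<ge> 2" by (simp add: length_filter_conv_card)
  then show False using at_most_one by simp
qed

lemma second_price_le:
  fixes v :: "nat \<Rightarrow> nat"
  assumes n2: "n \<ge> 2" and a: "a \<in> {1..n}" and others: "\<forall>j\<in>{1..n}. j \<noteq> a \<longrightarrow> v j \<le> q"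
  shows "snd (second_price n v) \<le> q"
proof (rule ccontr)
  define xs where "xs = map v [1..<Suc n]"
  define L where "L = sort xs"
  assume "\<not> snd (second_price n v) \<le> q"
  moreover have lL: "length L = n" by (simp add: L_def xs_def)
  ultimately have lt: "q < L ! (n - 2)"
    using n2 by (simp add: snd_second_price L_def xs_def rev_nth numeral_2_eq_2)
  have "L ! (n - 2) \<le> L ! (n - 1)" using sorted_nth_mono[of L] lL n2 by (simp add: L_def)
  then have "{n - 2, n - 1} \<subseteq> {k. k < length L \<and> q < L ! k}" using lt lL n2 by auto
  then have "card {n - 2, n - 1} \<le> card {k. k < length L \<and> q < L ! k}" by (intro card_mono) auto
  moreover have "card {n - 2, n - 1} = 2" using n2 by auto
  moreover have "length (filter (\<lambda>x. q < x) L) = length (filter (\<lambda>x. q < x) xs)"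
    by (simp add: L_def filter_sort)
  ultimately have at_least_two: "length (filter (\<lambda>x. q < x) xs) \<ge> 2"
    by (simp add: length_filter_conv_card)
  have "{k. k < length xs \<and> q < xs ! k} \<subseteq> {a - 1}"
  proof
    fix k assume "k \<in> {k. k < length xs \<and> q < xs ! k}"
    then have "k < n" "q < v (Suc k)" by (auto simp: xs_def nth_map_upt simp del: upt_Suc)
    then have "Suc k = a" using others by (metis Suc_leI atLeastAtMost_iff le_add1 not_le plus_1_eq_Suc)
    then show "k \<in> {a - 1}" by auto
  qed
  then have "card {k. k < length xs \<and> q < xs ! k} \<le> 1"
    using card_mono[of "{a - 1}"] by fastforce
  then show False using at_least_two by (simp add: length_filter_conv_card)
qed

lemma second_price_le_Max:
  fixes v :: "nat \<Rightarrow> nat"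
  assumes "n \<ge> 2"
  shows "snd (second_price n v) \<le> Max (v ` {1..n})"
proof -
  have "rev (sort (map v [1..<Suc n])) ! 1 \<in> set (rev (sort (map v [1..<Suc n])))"
    using assms by (intro nth_mem) simp
  then have "rev (sort (map v [1..<Suc n])) ! 1 \<in> v ` {1..n}" by auto
  then show ?thesis by (simp add: snd_second_price)
qed

lemma second_price_winner:
  fixes v :: "nat \<Rightarrow> nat"
  assumes n2: "n \<ge> 2" and "pmf (fst (second_price n v)) i \<noteq> 0"
  shows "v i = Max (v ` {1..n})" and "i \<in> {1..n}"
proof -
  define M where "M = {j \<in> {1..n}. v j = Max (v ` {1..n})}"
  have "Max (v ` {1..n}) \<in> v ` {1..n}" using n2 by (intro Max_in) auto
  then have "M \<noteq> {}" by (auto simp: M_def)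
  moreover have "pmf (pmf_of_set M) i \<noteq> 0" using assms(2) by (simp add: second_price_def M_def)
  ultimately have "i \<in> M" using pmf_of_set[of M] by (auto simp: M_def indicator_def split: if_splits)
  then show "v i = Max (v ` {1..n})" and "i \<in> {1..n}" by (simp_all add: M_def)
qed

lemma second_price_payoff_nonneg:
  fixes v :: "nat \<Rightarrow> nat"
  assumes n2: "n \<ge> 2"
  shows "0 \<le> payoff i (v i) (second_price n v)"
proof (cases "pmf (fst (second_price n v)) i = 0")
  case False
  then have "v i = Max (v ` {1..n})" using second_price_winner[OF n2] by blast
  then show ?thesis using second_price_le_Max[OF n2, of v] by (simp add: payoff_def)
qed (simp add: payoff_def)

lemma second_price_single_top:
  fixes v :: "nat \<Rightarrow> nat"
  assumes w: "w \<in> {1..n}" and j: "j \<in> {1..n}" "j \<noteq> w" "v j = p" and top: "p < v w"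
    and others: "\<forall>k\<in>{1..n}. k \<noteq> w \<longrightarrow> v k \<le> p"
  shows "second_price n v = (return_pmf w, p)"
proof -
  have n2: "n \<ge> 2" using w j by auto
  have below: "k \<in> {1..n} \<Longrightarrow> k \<noteq> w \<Longrightarrow> v k < v w" for k
    using others top le_less_trans by blast
  then have "k \<in> {1..n} \<Longrightarrow> v k \<le> v w" for k by (cases "k = w") (auto intro: less_imp_le)
  then have "Max (v ` {1..n}) = v w" using w by (intro Max_eqI) auto
  then have "{k \<in> {1..n}. v k = Max (v ` {1..n})} = {w}"
    using w below by (auto simp del: atLeastAtMost_iff) (metis less_irrefl)
  then have "fst (second_price n v) = return_pmf w"
    by (simp only: fst_second_price pmf_of_set_singleton)
  moreover have "p \<le> snd (second_price n v)" using second_price_ge[of w n j p v] w j top by simp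
  moreover have "snd (second_price n v) \<le> p" using second_price_le[OF n2 w others] .
  ultimately show ?thesis by (simp add: prod_eq_iff)
qed

lemma second_price_tie:
  fixes v :: "nat \<Rightarrow> nat"
  assumes T: "T \<subseteq> {1..n}" "a \<in> T" "b \<in> T" "a \<noteq> b"
    and tie: "\<forall>k\<in>T. v k = c" and below: "\<forall>k\<in>{1..n} - T. v k < c"
  shows "second_price n v = (pmf_of_set T, c)"
proof -
  have ab: "a \<in> {1..n}" "b \<in> {1..n}" using T by auto
  then have n2: "n \<ge> 2" using T(4) by auto
  have le: "k \<in> {1..n} \<Longrightarrow> v k \<le> c" for k
    using tie below by (cases "k \<in> T") (auto intro: less_imp_le)
  have "Max (v ` {1..n}) = c" using ab T tie le by (intro Max_eqI) auto
  then have "{k \<in> {1..n}. v k = Max (v ` {1..n})} = T"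
    using T tie below by (auto simp del: atLeastAtMost_iff) (metis Diff_iff less_irrefl)
  then have "fst (second_price n v) = pmf_of_set T" by (simp only: fst_second_price)
  moreover have "c \<le> snd (second_price n v)" using second_price_ge[of a n b c v] ab T tie by simp
  moreover have "snd (second_price n v) \<le> c" using second_price_le[OF n2 ab(1)] le by blast
  ultimately show ?thesis by (simp add: prod_eq_iff)
qed

section \<open>Runs of the auction\<close>

definition stay_or_leave :: "nat \<Rightarrow> nat \<Rightarrow> bool \<Rightarrow> nat set" where
  "stay_or_leave m p b = (if b then {p<..m} else {p})"

lemma stay_or_leave_eq_iff:
  assumes "x \<in> {{p<..m}, {p}}"
  shows "stay_or_leave m p b = x \<longleftrightarrow> (b \<longleftrightarrow> x = {p<..m})"
proof -
  have "{p<..m} \<noteq> {p}" by auto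
  then show ?thesis using assms by (auto simp: stay_or_leave_def)
qed

text \<open>\<open>Level p A ys off\<close>: the price is \<open>p\<close>, \<open>A\<close> lists the bidders active at \<open>p\<close>,
  \<open>ys\<close> are the stay/leave decisions already taken at \<open>p\<close> (so the next mover is
  \<open>A ! length ys\<close>), and \<open>off\<close> decisions were taken at lower prices.
  This is the unfolded form of the recursion \<^const>\<open>lvl\<close>.\<close>
datatype lstate = Level nat "nat list" "bool list" nat | Sold "nat pmf" nat

fun level_step :: "nat \<Rightarrow> lstate \<Rightarrow> bool \<Rightarrow> lstate" where
  "level_step m (Level p A ys off) b = (let ys' = ys @ [b] in
     if length ys' < length A then Level p A ys' off else
     (let S = map fst (filter snd (zip A ys')) in
      if length S = 1 then Sold (return_pmf (hd S)) p
      else if S = [] then Sold (pmf_of_set (set A)) p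
      else if Suc p < m then Level (Suc p) S [] (off + length A)
      else Sold (pmf_of_set (set S)) m))"
| "level_step m (Sold W p) b = Sold W p"

fun as_gstate :: "lstate \<Rightarrow> gstate" where
  "as_gstate (Level p A ys off) = Next (A ! length ys) p off"
| "as_gstate (Sold W p) = Done W p"

definition run :: "nat \<Rightarrow> nat \<Rightarrow> bool list \<Rightarrow> lstate" where
  "run n m bs = foldl (level_step m) (Level 1 [1..<Suc n] [] 0) bs"

definition in_level :: "lstate \<Rightarrow> bool" where
  "in_level s = (case s of Level _ _ _ _ \<Rightarrow> True | Sold _ _ \<Rightarrow> False)"

lemma foldl_level_step_Sold [simp]: "foldl (level_step m) (Sold W p) bs = Sold W p"
  by (induction bs) auto

lemma foldl_level_step_within_level:
  "length (xs @ zs) < length A \<Longrightarrow> foldl (level_step m) (Level p A xs off) zs = Level p A (xs @ zs) off"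
  by (induction zs arbitrary: xs) (auto simp: Let_def)

lemma lvl_eq_foldl_level_step:
  "length ys < length A \<Longrightarrow>
     lvl m p off A (ys @ bs) = as_gstate (foldl (level_step m) (Level p A ys off) bs)"
proof (induction bs arbitrary: ys p A off)
  case Nil
  then show ?case by (subst lvl.simps) simp
next
  case (Cons b bs)
  show ?case
  proof (cases "length (ys @ [b]) < length A")
    case True
    then show ?thesis using Cons.IH[of "ys @ [b]" A p off] by simp
  next
    case False
    with Cons.prems have len: "length (ys @ [b]) = length A" by simp
    have zip: "zip A (ys @ b # bs) = zip A (ys @ [b])"
      using zip_append2[of A "ys @ [b]" bs] len by simp
    have drop: "drop (length A) (ys @ b # bs) = bs"
      using len by (metis append_Cons append_Nil append_assoc append_eq_conv_conj)
    define S where "S = map fst (filter snd (zip A (ys @ [b])))"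
    have unfold: "lvl m p off A (ys @ b # bs) =
      (if length S = 1 then Done (return_pmf (hd S)) p
       else if S = [] then Done (pmf_of_set (set A)) p
       else if Suc p < m then lvl m (Suc p) (off + length A) S bs
       else Done (pmf_of_set (set S)) m)"
      by (subst lvl.simps) (use len zip drop in \<open>simp add: S_def Let_def\<close>)
    show ?thesis
    proof (cases "length S = 1 \<or> S = [] \<or> \<not> Suc p < m")
      case True
      then show ?thesis using unfold len False by (auto simp: S_def Let_def)
    next
      case continue: False
      then have "length ([]::bool list) < length S" by auto
      from Cons.IH[OF this, of "Suc p" "off + length A"]
      show ?thesis using unfold len False continue by (simp add: S_def Let_def)
    qed
  qed
qed

lemma run_snoc: "run n m (bs @ [b]) = level_step m (run n m bs) b"
  by (simp add: run_def)

lemma run_append: "run n m (bs @ cs) = foldl (level_step m) (run n m bs) cs"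
  by (simp add: run_def)

lemma run_Nil: "run n m [] = Level 1 [1..<Suc n] [] 0"
  by (simp add: run_def)

lemma run_not_Nil_if_Sold: "run n m bs = Sold W q \<Longrightarrow> bs \<noteq> []"
  by (auto simp: run_Nil)

lemma gvalid_Nil [simp]: "gvalid n m []"
  by (simp add: gvalid_def)

lemma gvalid_take: "gvalid n m bs \<Longrightarrow> gvalid n m (take k bs)"
  by (auto simp: gvalid_def min_def)

definition next_move :: "nat \<Rightarrow> nat \<Rightarrow> bool list \<Rightarrow> bool \<Rightarrow> (nat, nat) move" where
  "next_move n m bs b =
     (case gst n m bs of
        Next i p off \<Rightarrow> (\<lambda>j. if j = i then Some (stay_or_leave m p b) else None)
      | Done _ _ \<Rightarrow> (\<lambda>_. None))"

lemma gmove_eq_next_move: "gmove n m bs k = next_move n m (take k bs) (bs ! k)"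
  by (cases "gst n m (take k bs)") (auto simp: gmove_def next_move_def stay_or_leave_def)

lemma gmove_take: "k < j \<Longrightarrow> gmove n m (take j bs) k = gmove n m bs k"
  by (simp add: gmove_eq_next_move min_def)

lemma ghist_snoc: "ghist n m (bs @ [b]) = ghist n m bs @ [next_move n m bs b]"
proof -
  have "map (gmove n m (bs @ [b])) [0..<length bs] = map (gmove n m bs) [0..<length bs]"
    by (simp add: gmove_eq_next_move nth_append)
  then show ?thesis by (simp add: ghist_def gmove_eq_next_move)
qed

lemma length_ghist [simp]: "length (ghist n m bs) = Suc (length bs)"
  by (simp add: ghist_def)

lemma ghist_not_Nil [simp]: "ghist n m bs \<noteq> []"
  by (simp add: ghist_def)

lemma ghist_nth_0 [simp]: "ghist n m bs ! 0 = ginit n m"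
  by (simp add: ghist_def)

lemma ghist_nth_Suc: "k < length bs \<Longrightarrow> ghist n m bs ! Suc k = gmove n m bs k"
  by (simp add: ghist_def)

lemma take_Suc_ghist: "k \<le> length bs \<Longrightarrow> take (Suc k) (ghist n m bs) = ghist n m (take k bs)"
proof -
  assume k: "k \<le> length bs"
  have "map (gmove n m bs) [0..<k] = map (gmove n m (take k bs)) [0..<k]"
    by (simp add: gmove_take)
  then show ?thesis using k by (simp add: ghist_def take_map min_def)
qed

lemma report_Nil: "report \<Theta> i [] = \<Theta> i"
  by (simp add: report_def)

lemma report_snoc:
  "report \<Theta> j (h @ [a]) = (case a j of Some x \<Rightarrow> x | None \<Rightarrow> report \<Theta> j h)"
  by (cases "a j") (simp_all add: report_def)

lemma report_ghist_Nil: "report (\<lambda>_. {1..m}) j (ghist n m []) = {1..m}"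
  by (simp add: report_def ghist_def ginit_def)

lemma hist_Gstar_iff: "h \<in> hist (Gstar n m) \<longleftrightarrow> h = [] \<or> (\<exists>bs. gvalid n m bs \<and> h = ghist n m bs)"
  by (auto simp: Gstar_def)

lemma singleton_in_hist_Gstar_iff: "[a] \<in> hist (Gstar n m) \<longleftrightarrow> a = ginit n m"
proof
  assume "[a] \<in> hist (Gstar n m)"
  then obtain bs where "[a] = ghist n m bs" by (auto simp: hist_Gstar_iff)
  then show "a = ginit n m" by (cases bs) (auto simp: ghist_def)
next
  assume "a = ginit n m"
  then have "[a] = ghist n m []" by (simp add: ghist_def)
  then show "[a] \<in> hist (Gstar n m)" unfolding hist_Gstar_iff using gvalid_Nil by blast
qed

lemma active_Gstar_Nil: "active (Gstar n m) [] = {1..n}"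
  by (auto simp: active_def singleton_in_hist_Gstar_iff ginit_def)

lemma avail_Gstar_Nil: "i \<in> {1..n} \<Longrightarrow> avail (Gstar n m) i [] = {{1..m}}"
  by (auto simp: avail_def singleton_in_hist_Gstar_iff ginit_def)

lemma set_stayers:
  "set (map fst (filter snd (zip A ys))) = {A ! k | k. k < length A \<and> k < length ys \<and> ys ! k}"
  by (auto simp: set_zip image_iff) (metis fst_conv snd_conv)

lemma distinct_stayers: "distinct A \<Longrightarrow> distinct (map fst (filter snd (zip A ys)))"
proof (induction A arbitrary: ys)
  case Nil
  then show ?case by simp
next
  case (Cons a A)
  then show ?case by (cases ys) (auto dest: set_zip_leftD)
qed

lemma stayers_single:
  "length Y = length A \<Longrightarrow> r < length A \<Longrightarrow> (\<forall>k<length Y. Y ! k \<longleftrightarrow> k = r) \<Longrightarrow>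
     map fst (filter snd (zip A Y)) = [A ! r]"
proof (induction A arbitrary: Y r)
  case Nil
  then show ?case by simp
next
  case (Cons a A)
  then obtain y Y' where Y: "Y = y # Y'" by (cases Y) auto
  have tail: "\<forall>k<length Y'. Y' ! k \<longleftrightarrow> Suc k = r"
    using Cons.prems(3) Y by auto
  show ?case
  proof (cases r)
    case 0
    then have "filter snd (zip A Y') = []"
      using tail by (auto simp: filter_empty_conv set_zip)
    then show ?thesis using Cons.prems(3) Y 0 by auto
  next
    case (Suc r')
    then have "map fst (filter snd (zip A Y')) = [A ! r']"
      using Cons.IH[of Y' r'] tail Cons.prems Y by simp
    then show ?thesis using Cons.prems(3) Y Suc by auto
  qed
qed

lemma nstay_le_1: "(\<forall>r<length Z. Z ! r \<longrightarrow> r = r0) \<Longrightarrow> nstay Z \<le> 1"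
proof -
  assume "\<forall>r<length Z. Z ! r \<longrightarrow> r = r0"
  then have "{r. r < length Z \<and> id (Z ! r)} \<subseteq> {r0}" by auto
  then have "card {r. r < length Z \<and> id (Z ! r)} \<le> 1"
    using card_mono[of "{r0}"] by fastforce
  then show ?thesis by (simp add: nstay_def length_filter_conv_card)
qed

lemma nstay_eq_0: "(\<forall>r<length Z. \<not> Z ! r) \<Longrightarrow> nstay Z = 0"
  by (simp add: nstay_def length_filter_conv_card)

section \<open>The level invariant\<close>

locale ascending_auction =
  fixes n m :: nat
  assumes two_bidders: "2 \<le> n" and two_prices: "2 \<le> m"
begin

lemma gst_eq_as_gstate_run: "gst n m bs = as_gstate (run n m bs)"
  using lvl_eq_foldl_level_step[of "[]" "[1..<Suc n]" m 1 0 bs] two_bidders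
  by (simp add: gst_def run_def)

lemma gst_Next_iff: "(\<exists>i p off. gst n m bs = Next i p off) \<longleftrightarrow> in_level (run n m bs)"
  by (cases "run n m bs") (auto simp: gst_eq_as_gstate_run in_level_def)

lemma gvalid_snoc: "gvalid n m (bs @ [b]) \<longleftrightarrow> gvalid n m bs \<and> in_level (run n m bs)"
  by (auto simp: gvalid_def nth_append gst_Next_iff[symmetric] less_Suc_eq)

lemma in_level_run_take: "gvalid n m bs \<Longrightarrow> k < length bs \<Longrightarrow> in_level (run n m (take k bs))"
  by (auto simp: gvalid_def gst_Next_iff[symmetric])

lemma next_move_Level: "run n m bs = Level p A ys off \<Longrightarrow>
   next_move n m bs b = (\<lambda>j. if j = A ! length ys then Some (stay_or_leave m p b) else None)"
  by (simp add: next_move_def gst_eq_as_gstate_run)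

abbreviation bid_report :: "nat \<Rightarrow> bool list \<Rightarrow> nat set" where
  "bid_report j bs \<equiv> report (\<lambda>_. {1..m}) j (ghist n m bs)"

lemma bid_report_snoc: "run n m bs = Level p A ys off \<Longrightarrow>
   bid_report j (bs @ [b]) = (if j = A ! length ys then stay_or_leave m p b else bid_report j bs)"
  by (simp add: ghist_snoc report_snoc next_move_Level)

text \<open>The bound on \<open>off\<close> is only needed to show that the game is finite.\<close>
definition level_inv :: "bool list \<Rightarrow> nat \<Rightarrow> nat list \<Rightarrow> bool list \<Rightarrow> nat \<Rightarrow> bool" where
  "level_inv bs p A ys off \<longleftrightarrow> 1 \<le> p \<and> p < m \<and> distinct A \<and> set A \<subseteq> {1..n} \<and> 2 \<le> length A \<and>
     length ys < length A \<and> off + length ys = length bs \<and> ys = drop off bs \<and> off \<le> (p - 1) * n \<and>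
     run n m (take off bs) = Level p A [] off \<and>
     (\<forall>k<length A. bid_report (A ! k) bs =
        (if k < length ys then stay_or_leave m p (ys ! k) else {p..m})) \<and>
     (\<forall>j\<in>{1..n}. j \<notin> set A \<longrightarrow> (\<exists>q. 1 \<le> q \<and> q < p \<and> bid_report j bs = {q}))"

lemma level_inv_Nil: "level_inv [] 1 [1..<Suc n] [] 0"
proof -
  have "\<forall>k<n. bid_report ([1..<Suc n] ! k) [] = {1..m}"
    by (simp only: report_ghist_Nil) simp
  then show ?thesis using two_bidders two_prices by (auto simp: level_inv_def run_Nil)
qed

lemma bid_report_after_step:
  assumes L: "run n m bs = Level p A ys off" and I: "level_inv bs p A ys off"
  shows "\<forall>k<length A. bid_report (A ! k) (bs @ [b]) =
            (if k \<le> length ys then stay_or_leave m p ((ys @ [b]) ! k) else {p..m})"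
    and "\<forall>j. j \<notin> set A \<longrightarrow> bid_report j (bs @ [b]) = bid_report j bs"
proof -
  from I have d: "distinct A" and ly: "length ys < length A" by (auto simp: level_inv_def)
  show "\<forall>k<length A. bid_report (A ! k) (bs @ [b]) =
            (if k \<le> length ys then stay_or_leave m p ((ys @ [b]) ! k) else {p..m})"
  proof (intro allI impI)
    fix k assume k: "k < length A"
    have "A ! k = A ! length ys \<longleftrightarrow> k = length ys" using d k ly nth_eq_iff_index_eq by blast
    then show "bid_report (A ! k) (bs @ [b]) =
        (if k \<le> length ys then stay_or_leave m p ((ys @ [b]) ! k) else {p..m})"
      using bid_report_snoc[OF L, of "A ! k" b] I k by (auto simp: level_inv_def nth_append)
  qed
  show "\<forall>j. j \<notin> set A \<longrightarrow> bid_report j (bs @ [b]) = bid_report j bs"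
    using bid_report_snoc[OF L] ly by auto
qed

lemma level_inv_snoc_same_level:
  assumes L: "run n m bs = Level p A ys off" and I: "level_inv bs p A ys off"
    and more: "length (ys @ [b]) < length A"
  shows "level_inv (bs @ [b]) p A (ys @ [b]) off"
  using I more bid_report_after_step[OF L I, of b] by (auto simp: level_inv_def nth_append)

lemma level_inv_snoc_next_level:
  assumes L: "run n m bs = Level p A ys off" and I: "level_inv bs p A ys off"
    and L': "run n m (bs @ [b]) = Level (Suc p) S [] (off + length A)"
    and S: "S = map fst (filter snd (zip A (ys @ [b])))" and len: "length (ys @ [b]) = length A"
    and lS: "2 \<le> length S" and p: "Suc p < m"
  shows "level_inv (bs @ [b]) (Suc p) S [] (off + length A)"
proof -
  from I have I': "1 \<le> p" "distinct A" "set A \<subseteq> {1..n}" "off + length ys = length bs"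
    "off \<le> (p - 1) * n" "\<forall>j\<in>{1..n}. j \<notin> set A \<longrightarrow> (\<exists>q. 1 \<le> q \<and> q < p \<and> bid_report j bs = {q})"
    by (auto simp: level_inv_def)
  note after = bid_report_after_step[OF L I, of b]
  have setS: "set S = {A ! k | k. k < length A \<and> (ys @ [b]) ! k}"
    unfolding S set_stayers using len by auto
  have "length A \<le> n" using I' distinct_card[of A] card_mono[of "{1..n}" "set A"] by simp
  then have off: "off + length A \<le> (Suc p - 1) * n" using I' by (cases p) auto
  have stayers: "\<forall>k<length S. bid_report (S ! k) (bs @ [b]) = {Suc p..m}"
  proof (intro allI impI)
    fix k assume "k < length S"
    then obtain k' where "k' < length A" "(ys @ [b]) ! k'" "S ! k = A ! k'"
      using setS nth_mem[of k S] by auto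
    then show "bid_report (S ! k) (bs @ [b]) = {Suc p..m}"
      using after(1) len by (auto simp: stay_or_leave_def)
  qed
  have others: "\<exists>q. 1 \<le> q \<and> q < Suc p \<and> bid_report j (bs @ [b]) = {q}"
    if "j \<in> {1..n}" "j \<notin> set S" for j
  proof (cases "j \<in> set A")
    case True
    then obtain k where k: "k < length A" "j = A ! k" by (auto simp: in_set_conv_nth)
    moreover from this have "\<not> (ys @ [b]) ! k" using that setS by auto
    ultimately have "bid_report j (bs @ [b]) = {p}" using after(1) len by (auto simp: stay_or_leave_def)
    then show ?thesis using I' by auto
  next
    case False
    then show ?thesis using after(2) I' that by force
  qed
  have "distinct S" unfolding S using distinct_stayers I' by blast
  moreover have "set S \<subseteq> {1..n}" using setS I' by auto
  moreover have "off + length A = length (bs @ [b])" using I' len by simp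
  ultimately show ?thesis
    unfolding level_inv_def using I' lS p L' off stayers others by auto
qed

lemma level_inv_snoc:
  assumes L: "run n m bs = Level p A ys off" and I: "level_inv bs p A ys off"
    and L': "run n m (bs @ [b]) = Level p' A' ys' off'"
  shows "level_inv (bs @ [b]) p' A' ys' off'"
proof (cases "length (ys @ [b]) < length A")
  case True
  then have "p' = p" "A' = A" "ys' = ys @ [b]" "off' = off" using L L' by (auto simp: run_snoc Let_def)
  then show ?thesis using level_inv_snoc_same_level[OF L I True] by simp
next
  case False
  define S where "S = map fst (filter snd (zip A (ys @ [b])))"
  have "length ys < length A" using I unfolding level_inv_def by blast
  then have len: "length (ys @ [b]) = length A" using False by simp
  have "length S \<noteq> 1" "S \<noteq> []" "Suc p < m"
    and e: "p' = Suc p" "A' = S" "ys' = []" "off' = off + length A"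
    using L L' False by (auto simp: run_snoc Let_def S_def split: if_splits)
  moreover from this have "2 \<le> length S" by (cases S) (auto simp: Suc_le_eq)
  ultimately show ?thesis
    using level_inv_snoc_next_level[OF L I _ S_def len] L' by simp
qed

lemma level_inv_run: "gvalid n m bs \<Longrightarrow> run n m bs = Level p A ys off \<Longrightarrow> level_inv bs p A ys off"
proof (induction bs arbitrary: p A ys off rule: rev_induct)
  case Nil
  then have "p = 1" "A = [1..<Suc n]" "ys = []" "off = 0" by (auto simp: run_Nil simp del: upt_Suc)
  then show ?case using level_inv_Nil by simp
next
  case (snoc b bs)
  then have v: "gvalid n m bs" and "in_level (run n m bs)" using gvalid_snoc by auto
  then obtain p0 A0 ys0 off0 where L0: "run n m bs = Level p0 A0 ys0 off0"
    by (cases "run n m bs") (auto simp: in_level_def)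
  show ?case using level_inv_snoc[OF L0 snoc.IH[OF v L0] snoc.prems(2)] .
qed

lemma length_lt_if_level_inv: "level_inv bs p A ys off \<Longrightarrow> length bs < m * n"
proof -
  assume I: "level_inv bs p A ys off"
  then have "off \<le> (p - 1) * n" "off + length ys = length bs" "length ys < length A" "p < m"
    "distinct A" "set A \<subseteq> {1..n}" "1 \<le> p" by (auto simp: level_inv_def)
  moreover have "length A \<le> n" using calculation distinct_card[of A] card_mono[of "{1..n}" "set A"] by simp
  ultimately have "length bs < (p - 1) * n + n" by linarith
  also have "\<dots> = p * n" using \<open>1 \<le> p\<close> by (cases p) auto
  also have "\<dots> \<le> m * n" using \<open>p < m\<close> by simp
  finally show ?thesis .
qed

lemma length_le_if_gvalid: "gvalid n m bs \<Longrightarrow> length bs \<le> m * n"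
proof (induction bs rule: rev_induct)
  case (snoc b bs)
  then have "gvalid n m bs" "in_level (run n m bs)" using gvalid_snoc by auto
  moreover from this obtain p A ys off where "run n m bs = Level p A ys off"
    by (cases "run n m bs") (auto simp: in_level_def)
  ultimately have "length bs < m * n" using length_lt_if_level_inv level_inv_run by blast
  then show ?case by simp
qed simp

lemma ghist_inj:
  assumes v: "gvalid n m bs" and e: "ghist n m bs = ghist n m bs'"
  shows "bs = bs'"
proof -
  have l: "length bs = length bs'" using arg_cong[OF e, of length] by simp
  have "k < length bs \<Longrightarrow> bs ! k = bs' ! k" for k
  proof (induction k rule: less_induct)
    case (less k)
    obtain i p off where N: "gst n m (take k bs) = Next i p off"
      using v less by (auto simp: gvalid_def)
    have "gmove n m bs k = gmove n m bs' k" using e less l by (metis ghist_nth_Suc)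
    then have "gmove n m bs k i = gmove n m bs' k i" by simp
    moreover have "take k bs = take k bs'" using less l by (intro nth_equalityI) auto
    ultimately have "(if bs ! k then {p<..m} else {p}) = (if bs' ! k then {p<..m} else {p})"
      using N by (simp add: gmove_def)
    then show ?case by (auto split: if_splits)
  qed
  then show ?thesis using l by (intro nth_equalityI) auto
qed

lemma gdec_ghist: "gvalid n m bs \<Longrightarrow> gdec n m (ghist n m bs) = bs"
  unfolding gdec_def by (rule some_equality) (auto intro: ghist_inj)

lemma run_take_within_level:
  assumes I: "level_inv bs p A ys off" and k: "off \<le> k" "k \<le> length bs"
  shows "run n m (take k bs) = Level p A (take (k - off) ys) off"
proof -
  from I have t: "run n m (take off bs) = Level p A [] off" and ys: "ys = drop off bs"
    and l: "length ys < length A" by (auto simp: level_inv_def)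
  have "take k bs = take off bs @ take (k - off) ys" using k ys by (metis le_add_diff_inverse take_add)
  then have "run n m (take k bs) = foldl (level_step m) (Level p A [] off) (take (k - off) ys)"
    using t by (simp add: run_append)
  also have "\<dots> = Level p A (take (k - off) ys) off"
    using l by (subst foldl_level_step_within_level) auto
  finally show ?thesis .
qed

section \<open>The auction is a gradual mechanism implementing the second-price rule\<close>

lemma snoc_ghist_in_hist_Gstar_iff:
  assumes v: "gvalid n m bs"
  shows "ghist n m bs @ [a] \<in> hist (Gstar n m) \<longleftrightarrow> in_level (run n m bs) \<and> (\<exists>b. a = next_move n m bs b)"
proof
  assume "ghist n m bs @ [a] \<in> hist (Gstar n m)"
  then obtain bs' where v': "gvalid n m bs'" and e: "ghist n m bs @ [a] = ghist n m bs'"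
    by (auto simp: hist_Gstar_iff)
  have "bs' \<noteq> []" using arg_cong[OF e, of length] by auto
  then obtain bs0 b where bs': "bs' = bs0 @ [b]" by (cases bs' rule: rev_cases) auto
  with v' have v0: "gvalid n m bs0" "in_level (run n m bs0)" using gvalid_snoc by auto
  have "ghist n m bs @ [a] = ghist n m bs0 @ [next_move n m bs0 b]" using e bs' by (simp add: ghist_snoc)
  then have "bs = bs0" "a = next_move n m bs0 b" using ghist_inj[OF v] by auto
  then show "in_level (run n m bs) \<and> (\<exists>b. a = next_move n m bs b)" using v0 by auto
next
  assume "in_level (run n m bs) \<and> (\<exists>b. a = next_move n m bs b)"
  then obtain b where "in_level (run n m bs)" "a = next_move n m bs b" by auto
  then have "gvalid n m (bs @ [b])" "ghist n m (bs @ [b]) = ghist n m bs @ [a]"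
    using v gvalid_snoc by (auto simp: ghist_snoc)
  then show "ghist n m bs @ [a] \<in> hist (Gstar n m)" unfolding hist_Gstar_iff by metis
qed

lemma snoc_ghist_Level_in_hist_Gstar_iff:
  assumes v: "gvalid n m bs" and L: "run n m bs = Level p A ys off"
  shows "ghist n m bs @ [a] \<in> hist (Gstar n m) \<longleftrightarrow>
    (\<forall>j. (j = A ! length ys \<longrightarrow> (\<exists>x \<in> {{p<..m}, {p}}. a j = Some x)) \<and>
         (j \<noteq> A ! length ys \<longrightarrow> a j = None))" (is "_ \<longleftrightarrow> ?move a")
proof -
  have "?move a \<longleftrightarrow> (\<exists>b. a = next_move n m bs b)"
  proof
    assume r: "?move a"
    then obtain x where x: "x \<in> {{p<..m}, {p}}" "a (A ! length ys) = Some x" by auto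
    then obtain b where "x = stay_or_leave m p b"
      unfolding stay_or_leave_def by (metis (full_types) insert_iff singleton_iff)
    then have "a = next_move n m bs b" using r x next_move_Level[OF L] by (auto simp: fun_eq_iff)
    then show "\<exists>b. a = next_move n m bs b" by blast
  qed (auto simp: next_move_Level[OF L] stay_or_leave_def)
  then show ?thesis using snoc_ghist_in_hist_Gstar_iff[OF v] L by (simp add: in_level_def)
qed

lemma active_Gstar_Level: "gvalid n m bs \<Longrightarrow> run n m bs = Level p A ys off \<Longrightarrow>
    active (Gstar n m) (ghist n m bs) = {A ! length ys}"
  unfolding active_def using snoc_ghist_in_hist_Gstar_iff[of bs]
  by (auto simp: in_level_def next_move_Level split: if_splits)

lemma active_Gstar_Sold: "gvalid n m bs \<Longrightarrow> run n m bs = Sold W q \<Longrightarrow>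
    active (Gstar n m) (ghist n m bs) = {}"
  by (auto simp: active_def snoc_ghist_in_hist_Gstar_iff in_level_def)

lemma avail_Gstar_Level:
  assumes v: "gvalid n m bs" and L: "run n m bs = Level p A ys off"
  shows "avail (Gstar n m) (A ! length ys) (ghist n m bs) = {{p<..m}, {p}}"
proof -
  have "avail (Gstar n m) (A ! length ys) (ghist n m bs) = range (stay_or_leave m p)"
    unfolding avail_def using snoc_ghist_in_hist_Gstar_iff[OF v] L
    by (auto simp: in_level_def next_move_Level split: if_splits)
  also have "\<dots> = {{p<..m}, {p}}"
    by (auto simp: stay_or_leave_def image_def)
  finally show ?thesis .
qed

lemma terminal_Gstar_iff: "terminal (Gstar n m) h \<longleftrightarrow>
    (\<exists>bs W q. gvalid n m bs \<and> h = ghist n m bs \<and> run n m bs = Sold W q)"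
proof
  assume "terminal (Gstar n m) h"
  then have h: "h \<in> hist (Gstar n m)" and na: "\<forall>a. h @ [a] \<notin> hist (Gstar n m)"
    by (auto simp: terminal_def)
  have "h \<noteq> []" using na singleton_in_hist_Gstar_iff by auto
  then obtain bs where v: "gvalid n m bs" and e: "h = ghist n m bs" using h by (auto simp: hist_Gstar_iff)
  have "\<not> in_level (run n m bs)" using na snoc_ghist_in_hist_Gstar_iff[OF v] e by auto
  then show "\<exists>bs W q. gvalid n m bs \<and> h = ghist n m bs \<and> run n m bs = Sold W q"
    using v e by (cases "run n m bs") (auto simp: in_level_def)
next
  assume "\<exists>bs W q. gvalid n m bs \<and> h = ghist n m bs \<and> run n m bs = Sold W q"
  then obtain bs W q where v: "gvalid n m bs" and e: "h = ghist n m bs" and "run n m bs = Sold W q"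
    by blast
  then have "ghist n m bs @ [a] \<notin> hist (Gstar n m)" for a
    using snoc_ghist_in_hist_Gstar_iff[OF v] by (simp add: in_level_def)
  moreover have "ghist n m bs \<in> hist (Gstar n m)" using v by (auto simp: hist_Gstar_iff)
  ultimately show "terminal (Gstar n m) h" unfolding terminal_def e by blast
qed

lemma dnodes_Gstar_iff:
  "h \<in> dnodes (Gstar n m) i \<longleftrightarrow> (h = [] \<and> i \<in> {1..n}) \<or>
    (\<exists>bs p A ys off. gvalid n m bs \<and> h = ghist n m bs \<and> run n m bs = Level p A ys off \<and> i = A ! length ys)"
proof
  assume "h \<in> dnodes (Gstar n m) i"
  then have h: "h \<in> hist (Gstar n m)" and a: "i \<in> active (Gstar n m) h" by (auto simp: dnodes_def)
  show "(h = [] \<and> i \<in> {1..n}) \<or>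
    (\<exists>bs p A ys off. gvalid n m bs \<and> h = ghist n m bs \<and> run n m bs = Level p A ys off \<and> i = A ! length ys)"
  proof (cases "h = []")
    case True
    then show ?thesis using a active_Gstar_Nil by auto
  next
    case False
    then obtain bs where v: "gvalid n m bs" and e: "h = ghist n m bs" using h by (auto simp: hist_Gstar_iff)
    show ?thesis
    proof (cases "run n m bs")
      case (Level p A ys off)
      then show ?thesis using active_Gstar_Level[OF v Level] a e v by auto
    next
      case (Sold W q)
      then show ?thesis using active_Gstar_Sold[OF v Sold] a e by auto
    qed
  qed
next
  assume "(h = [] \<and> i \<in> {1..n}) \<or>
    (\<exists>bs p A ys off. gvalid n m bs \<and> h = ghist n m bs \<and> run n m bs = Level p A ys off \<and> i = A ! length ys)"
  then show "h \<in> dnodes (Gstar n m) i"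
    unfolding dnodes_def using active_Gstar_Nil active_Gstar_Level by (auto simp: hist_Gstar_iff)
qed

definition info_runs :: "bool list \<Rightarrow> nat \<Rightarrow> nat \<Rightarrow> nat \<Rightarrow> bool list set" where
  "info_runs bs i p off = {bs'. gvalid n m bs' \<and> gst n m bs' = Next i p off \<and>
     take off bs' = take off bs \<and>
     (if 2 \<le> nstay (drop off bs) then drop off bs' = drop off bs else nstay (drop off bs') < 2)}"

lemma info_Gstar_ghist: "gvalid n m bs \<Longrightarrow> run n m bs = Level p A ys off \<Longrightarrow>
   info (Gstar n m) i (ghist n m bs) = ghist n m ` info_runs bs i p off"
  by (simp add: Gstar_def Gstar_info_def gdec_ghist gst_eq_as_gstate_run info_runs_def)

lemma in_info_runs_self: "gvalid n m bs \<Longrightarrow> run n m bs = Level p A ys off \<Longrightarrow>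
   bs \<in> info_runs bs (A ! length ys) p off"
  by (auto simp: info_runs_def gst_eq_as_gstate_run)

lemma info_runsD:
  assumes v: "gvalid n m bs" and L: "run n m bs = Level p A ys off"
    and b': "bs' \<in> info_runs bs (A ! length ys) p off"
  obtains ys' where "run n m bs' = Level p A ys' off" "length ys' = length ys" "gvalid n m bs'"
    "bs' = take off bs @ ys'" "level_inv bs' p A ys' off"
proof -
  from b' have v': "gvalid n m bs'" and g': "gst n m bs' = Next (A ! length ys) p off"
    and tk: "take off bs' = take off bs" by (auto simp: info_runs_def)
  obtain A2 ys2 where L2: "run n m bs' = Level p A2 ys2 off" and e: "A2 ! length ys2 = A ! length ys"
    using g' gst_eq_as_gstate_run by (cases "run n m bs'") auto
  have I: "level_inv bs p A ys off" using level_inv_run[OF v L] .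
  have I2: "level_inv bs' p A2 ys2 off" using level_inv_run[OF v' L2] .
  have "run n m (take off bs') = Level p A2 [] off" "run n m (take off bs) = Level p A [] off"
    using I I2 by (simp_all add: level_inv_def)
  then have A2: "A2 = A" using tk by simp
  have "distinct A" "length ys < length A" "length ys2 < length A" using I I2 A2 by (auto simp: level_inv_def)
  then have "length ys2 = length ys" using e A2 nth_eq_iff_index_eq by blast
  moreover have "bs' = take off bs @ ys2" using I2 tk by (metis append_take_drop_id level_inv_def)
  ultimately show ?thesis using that L2 A2 v' I2 by auto
qed

lemma info_runs_eq:
  assumes b': "bs' \<in> info_runs bs i p off"
  shows "info_runs bs' i p off = info_runs bs i p off"
proof (cases "2 \<le> nstay (drop off bs)")
  case True
  then have "drop off bs' = drop off bs" "take off bs' = take off bs" using b' by (auto simp: info_runs_def)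
  then have "bs' = bs" by (metis append_take_drop_id)
  then show ?thesis by simp
next
  case False
  then have "\<not> 2 \<le> nstay (drop off bs')" "take off bs' = take off bs" using b' by (auto simp: info_runs_def)
  then show ?thesis using False unfolding info_runs_def by simp
qed

lemma info_sets_Gstar:
  assumes h: "h \<in> dnodes (Gstar n m) i"
  shows "h \<in> info (Gstar n m) i h \<and> info (Gstar n m) i h \<subseteq> dnodes (Gstar n m) i \<and>
     (\<forall>h' \<in> info (Gstar n m) i h. info (Gstar n m) i h' = info (Gstar n m) i h \<and>
          avail (Gstar n m) i h' = avail (Gstar n m) i h)"
proof -
  consider "h = []" "i \<in> {1..n}" | bs p A ys off where "gvalid n m bs" "h = ghist n m bs"
     "run n m bs = Level p A ys off" "i = A ! length ys"
    using h dnodes_Gstar_iff by blast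
  then show ?thesis
  proof cases
    case 1
    then show ?thesis using h by (simp add: Gstar_def Gstar_info_def)
  next
    case 2
    note v = 2(1) and e = 2(2) and L = 2(3) and i = 2(4)
    have inf: "info (Gstar n m) i h = ghist n m ` info_runs bs i p off"
      using info_Gstar_ghist[OF v L] e by simp
    have "h' \<in> dnodes (Gstar n m) i \<and> info (Gstar n m) i h' = info (Gstar n m) i h \<and>
        avail (Gstar n m) i h' = avail (Gstar n m) i h" if h': "h' \<in> info (Gstar n m) i h" for h'
    proof -
      obtain bs' where b': "bs' \<in> info_runs bs i p off" and e': "h' = ghist n m bs'"
        using h' inf by auto
      obtain ys' where L': "run n m bs' = Level p A ys' off" and l': "length ys' = length ys"
        and v': "gvalid n m bs'"
        using info_runsD[OF v L] b' i by metis
      have "info (Gstar n m) i h' = ghist n m ` info_runs bs' i p off"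
        using info_Gstar_ghist[OF v' L'] e' by simp
      then have "info (Gstar n m) i h' = info (Gstar n m) i h" using info_runs_eq[OF b'] inf by simp
      moreover have "avail (Gstar n m) i h' = avail (Gstar n m) i h"
        using avail_Gstar_Level[OF v' L'] avail_Gstar_Level[OF v L] e e' i l' by simp
      moreover have "h' \<in> dnodes (Gstar n m) i" using dnodes_Gstar_iff e' i L' v' l' by metis
      ultimately show ?thesis by blast
    qed
    moreover have "h \<in> info (Gstar n m) i h" using inf e in_info_runs_self[OF v L] i by auto
    ultimately show ?thesis by blast
  qed
qed

text \<open>Two runs in the same information set of the current mover agree before the
  current price level, and at this level the mover has not yet moved in either.\<close>
lemma info_runs_same_experience:
  assumes v: "gvalid n m bs" and L: "run n m bs = Level p A ys off"
    and b': "bs' \<in> info_runs bs (A ! length ys) p off" and k: "k < length (ghist n m bs)"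
  shows "(ghist n m bs' ! k) (A ! length ys) = (ghist n m bs ! k) (A ! length ys)"
    and "(ghist n m bs ! k) (A ! length ys) \<noteq> None \<Longrightarrow> take k (ghist n m bs') = take k (ghist n m bs)"
proof -
  obtain ys' where L': "run n m bs' = Level p A ys' off" and l': "length ys' = length ys"
    and bs': "bs' = take off bs @ ys'" and I': "level_inv bs' p A ys' off"
    using info_runsD[OF v L b'] by metis
  have I: "level_inv bs p A ys off" using level_inv_run[OF v L] .
  have lb: "length bs' = length bs" "off \<le> length bs" using I I' l' by (auto simp: level_inv_def)
  have tk: "take off bs' = take off bs" using bs' lb by simp
  have goal: "(ghist n m bs' ! k) (A ! length ys) = (ghist n m bs ! k) (A ! length ys) \<and>
    ((ghist n m bs ! k) (A ! length ys) \<noteq> None \<longrightarrow> take k (ghist n m bs') = take k (ghist n m bs))"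
  proof (cases k)
    case (Suc k')
    then have k': "k' < length bs" using k by simp
    have moves: "ghist n m bs ! k = next_move n m (take k' bs) (bs ! k')"
      "ghist n m bs' ! k = next_move n m (take k' bs') (bs' ! k')"
      using Suc k' lb by (auto simp: ghist_nth_Suc gmove_eq_next_move)
    show ?thesis
    proof (cases "k' < off")
      case True
      then have "take k' bs' = take k' bs" "bs' ! k' = bs ! k'" using tk
        by (metis min.strict_order_iff take_take, metis nth_take)
      then show ?thesis using moves Suc take_Suc_ghist[of k' bs] take_Suc_ghist[of k' bs'] k' lb by simp
    next
      case False
      have "run n m (take k' bs) = Level p A (take (k' - off) ys) off"
        "run n m (take k' bs') = Level p A (take (k' - off) ys') off"
        using run_take_within_level[OF I] run_take_within_level[OF I'] False k' lb by simp_all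
      moreover have "k' - off < length ys" using I False k' by (auto simp: level_inv_def)
      moreover have "distinct A" "length ys < length A" using I by (auto simp: level_inv_def)
      ultimately show ?thesis using moves l' by (simp add: next_move_Level nth_eq_iff_index_eq)
    qed
  qed simp
  then show "(ghist n m bs' ! k) (A ! length ys) = (ghist n m bs ! k) (A ! length ys)"
    and "(ghist n m bs ! k) (A ! length ys) \<noteq> None \<Longrightarrow> take k (ghist n m bs') = take k (ghist n m bs)"
    by blast+
qed

lemma experience_Gstar_eq:
  assumes h: "h \<in> dnodes (Gstar n m) i" and h': "h' \<in> info (Gstar n m) i h"
  shows "experience (Gstar n m) i h' = experience (Gstar n m) i h"
proof -
  consider "h = []" "i \<in> {1..n}" | bs p A ys off where "gvalid n m bs" "h = ghist n m bs"
     "run n m bs = Level p A ys off" "i = A ! length ys"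
    using h dnodes_Gstar_iff by blast
  then show ?thesis
  proof cases
    case 1
    then show ?thesis using h' by (simp add: Gstar_def Gstar_info_def)
  next
    case 2
    note v = 2(1) and e = 2(2) and L = 2(3) and i = 2(4)
    obtain bs' where b': "bs' \<in> info_runs bs i p off" and e': "h' = ghist n m bs'"
      using h' info_Gstar_ghist[OF v L] e by auto
    obtain ys' where "length ys' = length ys" "level_inv bs' p A ys' off"
      using info_runsD[OF v L] b' i by metis
    then have lh: "length h' = length h"
      using e e' level_inv_run[OF v L] by (auto simp: level_inv_def)
    note same = info_runs_same_experience[OF v L b'[unfolded i], folded i e e']
    have "filter (\<lambda>k. (h' ! k) i \<noteq> None) [0..<length h'] = filter (\<lambda>k. (h ! k) i \<noteq> None) [0..<length h]"
      using lh same(1) by (intro filter_cong) auto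
    then show ?thesis unfolding experience_def using same by (intro map_cong) auto
  qed
qed

lemma finite_hist_Gstar: "finite (hist (Gstar n m))"
proof -
  have "hist (Gstar n m) \<subseteq> insert [] (ghist n m ` {bs. set bs \<subseteq> UNIV \<and> length bs \<le> m * n})"
    using length_le_if_gvalid by (auto simp: hist_Gstar_iff)
  moreover have "finite {bs :: bool list. set bs \<subseteq> UNIV \<and> length bs \<le> m * n}"
    by (rule finite_lists_length_le) simp
  ultimately show ?thesis using finite_subset by blast
qed

lemma hist_Gstar_prefix_closed: "h @ [a] \<in> hist (Gstar n m) \<Longrightarrow> h \<in> hist (Gstar n m)"
proof -
  assume "h @ [a] \<in> hist (Gstar n m)"
  then obtain bs where v: "gvalid n m bs" and e: "h @ [a] = ghist n m bs" by (auto simp: hist_Gstar_iff)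
  show ?thesis
  proof (cases bs rule: rev_cases)
    case Nil
    then show ?thesis using e by (auto simp: ghist_def hist_Gstar_iff)
  next
    case (snoc bs0 b)
    then have "h = ghist n m bs0" "gvalid n m bs0" using e v gvalid_snoc by (auto simp: ghist_snoc)
    then show ?thesis by (auto simp: hist_Gstar_iff)
  qed
qed

lemma nonterminal_Gstar:
  assumes h: "h \<in> hist (Gstar n m)" and nt: "\<not> terminal (Gstar n m) h"
  shows "active (Gstar n m) h \<noteq> {} \<and> active (Gstar n m) h \<subseteq> {1..n} \<and>
        (\<forall>a. h @ [a] \<in> hist (Gstar n m) \<longleftrightarrow>
              (\<forall>i. (i \<in> active (Gstar n m) h \<longrightarrow> (\<exists>x \<in> avail (Gstar n m) i h. a i = Some x)) \<and>
                   (i \<notin> active (Gstar n m) h \<longrightarrow> a i = None)))"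
proof (cases "h = []")
  case True
  have "\<And>a. [a] \<in> hist (Gstar n m) \<longleftrightarrow>
     (\<forall>i. (i \<in> {1..n} \<longrightarrow> (\<exists>x \<in> {{1..m}}. a i = Some x)) \<and> (i \<notin> {1..n} \<longrightarrow> a i = None))"
    by (auto simp: singleton_in_hist_Gstar_iff ginit_def)
  then show ?thesis using True active_Gstar_Nil avail_Gstar_Nil two_bidders by auto
next
  case False
  obtain bs where v: "gvalid n m bs" and e: "h = ghist n m bs" using h False by (auto simp: hist_Gstar_iff)
  have "\<not> (\<exists>W q. run n m bs = Sold W q)" using nt terminal_Gstar_iff v e by blast
  then obtain p A ys off where L: "run n m bs = Level p A ys off" by (cases "run n m bs") auto
  define i where "i = A ! length ys"
  have "length ys < length A" "set A \<subseteq> {1..n}" using level_inv_run[OF v L] by (auto simp: level_inv_def)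
  then have "i \<in> {1..n}" unfolding i_def using nth_mem by blast
  moreover have "active (Gstar n m) h = {i}" "avail (Gstar n m) i h = {{p<..m}, {p}}"
    using active_Gstar_Level[OF v L] avail_Gstar_Level[OF v L] e i_def by simp_all
  moreover have "\<And>a. h @ [a] \<in> hist (Gstar n m) \<longleftrightarrow>
     (\<forall>j. (j = i \<longrightarrow> (\<exists>x \<in> {{p<..m}, {p}}. a j = Some x)) \<and> (j \<noteq> i \<longrightarrow> a j = None))"
    using snoc_ghist_Level_in_hist_Gstar_iff[OF v L] e i_def by simp
  ultimately show ?thesis by auto
qed

lemma extensive_form_Gstar: "extensive_form {1..n} (Gstar n m)"
proof -
  have "\<not> terminal (Gstar n m) []" using terminal_Gstar_iff ghist_not_Nil by metis
  moreover have "[] \<in> hist (Gstar n m)" by (simp add: hist_Gstar_iff)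
  ultimately show ?thesis
    unfolding extensive_form_def
    apply (intro conjI)
    using finite_hist_Gstar apply blast
    apply blast
    using hist_Gstar_prefix_closed apply blast
    using nonterminal_Gstar apply blast
    apply blast
    using active_Gstar_Nil apply blast
    using info_sets_Gstar apply blast
    using experience_Gstar_eq apply blast
    done
qed

lemma run_snoc_Sold:
  assumes L: "run n m bs = Level p A ys off" and I: "level_inv bs p A ys off"
    and F: "run n m (bs @ [b]) = Sold W q"
  defines "S \<equiv> map fst (filter snd (zip A (ys @ [b])))"
  shows "length (ys @ [b]) = length A"
    and "(W, q) = (if length S = 1 then (return_pmf (hd S), p)
                   else if S = [] then (pmf_of_set (set A), p) else (pmf_of_set (set S), m))"
    and "2 \<le> length S \<Longrightarrow> Suc p = m"
proof -
  have step: "level_step m (Level p A ys off) b = Sold W q" using F L by (simp add: run_snoc)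
  have "length ys < length A" "p < m" using I unfolding level_inv_def by blast+
  then show len: "length (ys @ [b]) = length A" using step by (cases "Suc (length ys) < length A") auto
  show "(W, q) = (if length S = 1 then (return_pmf (hd S), p)
                  else if S = [] then (pmf_of_set (set A), p) else (pmf_of_set (set S), m))"
    using step len unfolding S_def by (auto simp: Let_def split: if_splits)
  show "2 \<le> length S \<Longrightarrow> Suc p = m"
    using step len \<open>p < m\<close> unfolding S_def by (auto simp: Let_def split: if_splits)
qed

lemma final_level_values:
  assumes L: "run n m bs = Level p A ys off" and I: "level_inv bs p A ys off"
    and len: "length (ys @ [b]) = length A"
    and th: "\<forall>j\<in>{1..n}. \<theta> j \<in> bid_report j (bs @ [b])"
  defines "S \<equiv> map fst (filter snd (zip A (ys @ [b])))"
  shows "\<forall>j\<in>set S. p < \<theta> j \<and> \<theta> j \<le> m"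
    and "\<forall>j\<in>set A - set S. \<theta> j = p"
    and "\<forall>j\<in>{1..n} - set A. \<theta> j < p"
proof -
  from I have A: "set A \<subseteq> {1..n}"
    and out: "\<forall>j\<in>{1..n}. j \<notin> set A \<longrightarrow> (\<exists>q. q < p \<and> bid_report j bs = {q})"
    by (auto simp: level_inv_def)
  note after = bid_report_after_step[OF L I, of b]
  have setS: "set S = {A ! k | k. k < length A \<and> (ys @ [b]) ! k}"
    unfolding S_def set_stayers using len by auto
  show "\<forall>j\<in>set S. p < \<theta> j \<and> \<theta> j \<le> m"
  proof
    fix j assume "j \<in> set S"
    then obtain k where k: "k < length A" "j = A ! k" "(ys @ [b]) ! k" unfolding setS by blast
    then have "bid_report j (bs @ [b]) = {p<..m}" using after(1) len by (auto simp: stay_or_leave_def)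
    moreover have "j \<in> {1..n}" using k A nth_mem by blast
    ultimately show "p < \<theta> j \<and> \<theta> j \<le> m" using th by auto
  qed
  show "\<forall>j\<in>set A - set S. \<theta> j = p"
  proof
    fix j assume j: "j \<in> set A - set S"
    then obtain k where k: "k < length A" "j = A ! k" by (auto simp: in_set_conv_nth)
    then have "\<not> (ys @ [b]) ! k" using j setS by auto
    then have "bid_report j (bs @ [b]) = {p}" using after(1) len k by (auto simp: stay_or_leave_def)
    then show "\<theta> j = p" using th j A by auto
  qed
  show "\<forall>j\<in>{1..n} - set A. \<theta> j < p"
  proof
    fix j assume j: "j \<in> {1..n} - set A"
    have "\<theta> j \<in> bid_report j (bs @ [b])" using th j by blast
    moreover have "bid_report j (bs @ [b]) = bid_report j bs" using after(2) j by blast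
    moreover obtain q where "q < p" "bid_report j bs = {q}" using out j by blast
    ultimately show "\<theta> j < p" by simp
  qed
qed

lemma outcome_eq_second_price:
  assumes v: "gvalid n m bs" and F: "run n m bs = Sold W q"
    and th: "\<forall>j\<in>{1..n}. \<theta> j \<in> bid_report j bs"
  shows "(W, q) = second_price n \<theta>"
proof -
  obtain bs0 b where bs: "bs = bs0 @ [b]" using run_not_Nil_if_Sold[OF F] by (cases bs rule: rev_cases) auto
  have "gvalid n m bs0" "in_level (run n m bs0)" using v bs gvalid_snoc by auto
  then obtain p A ys off where L: "run n m bs0 = Level p A ys off" and I: "level_inv bs0 p A ys off"
    using level_inv_run by (cases "run n m bs0") (auto simp: in_level_def)
  define S where "S = map fst (filter snd (zip A (ys @ [b])))"
  note last = run_snoc_Sold[OF L I F[unfolded bs], folded S_def]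
  note final = final_level_values[OF L I last(1) th[unfolded bs], folded S_def]
  note stay = final(1) and leave = final(2) and below = final(3)
  from I have A: "distinct A" "set A \<subseteq> {1..n}" "2 \<le> length A" "p < m"
    by (auto simp: level_inv_def)
  have SA: "set S \<subseteq> set A" "distinct S" unfolding S_def using distinct_stayers A(1)
    by (auto dest: set_zip_leftD)
  have A01: "A ! 0 \<in> set A" "A ! 1 \<in> set A" "A ! 0 \<noteq> A ! 1"
  proof -
    have "0 < length A" "1 < length A" using A(3) by auto
    then show "A ! 0 \<in> set A" "A ! 1 \<in> set A" "A ! 0 \<noteq> A ! 1"
      using nth_eq_iff_index_eq[OF A(1)] by auto
  qed
  have A_or_below: "j \<in> {1..n} \<Longrightarrow> j \<notin> set S \<Longrightarrow> \<theta> j \<le> p" for j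
    using leave below by (cases "j \<in> set A") (auto intro: less_imp_le)
  consider "length S = 1" | "S = []" | "2 \<le> length S" by (cases S) (auto simp: Suc_le_eq)
  then show ?thesis
  proof cases
    case 1
    then obtain w where w: "S = [w]" by (cases S) auto
    obtain j where j: "j \<in> set A" "j \<noteq> w" using A01 by metis
    have "w \<in> {1..n}" "p < \<theta> w" using w SA(1) A(2) stay by auto
    moreover have "j \<in> {1..n}" "\<theta> j = p" using j w A(2) leave by auto
    moreover have "\<forall>k\<in>{1..n}. k \<noteq> w \<longrightarrow> \<theta> k \<le> p" using A_or_below w by simp
    ultimately show ?thesis using last(2) 1 w j(2) second_price_single_top[of w n j \<theta> p] by simp
  next
    case 2
    then have "\<forall>j\<in>set A. \<theta> j = p" using leave by simp
    then show ?thesis using last(2) 2 second_price_tie[OF A(2) A01 _ below] by simp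
  next
    case 3
    then have "0 < length S" "1 < length S" by auto
    then have S01: "S ! 0 \<in> set S" "S ! 1 \<in> set S" "S ! 0 \<noteq> S ! 1"
      using nth_eq_iff_index_eq[OF SA(2)] by auto
    have "\<forall>j\<in>set S. \<theta> j = m"
    proof
      fix j assume "j \<in> set S"
      then have "p < \<theta> j" "\<theta> j \<le> m" using stay by auto
      then show "\<theta> j = m" using last(3)[OF 3] by linarith
    qed
    moreover have "\<forall>j\<in>{1..n} - set S. \<theta> j < m" using A_or_below A(4) le_less_trans by blast
    moreover have "set S \<subseteq> {1..n}" using SA(1) A(2) by blast
    ultimately show ?thesis
      using last(2) 3 second_price_tie[of "set S" n "S ! 0" "S ! 1" \<theta> m] S01 by auto
  qed
qed

lemma outc_Gstar_ghist: "gvalid n m bs \<Longrightarrow> run n m bs = Sold W q \<Longrightarrow> outc (Gstar n m) (ghist n m bs) = (W, q)"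
  by (simp add: Gstar_def Gstar_outc_def gdec_ghist gst_eq_as_gstate_run)

lemma implements_Gstar: "implements (\<lambda>_. {1..m}) {1..n} (second_price n) (Gstar n m)"
  unfolding implements_def
proof (intro allI impI)
  fix z \<theta> assume "terminal (Gstar n m) z" and "\<forall>i\<in>{1..n}. \<theta> i \<in> report (\<lambda>_. {1..m}) i z"
  moreover obtain bs W q where "gvalid n m bs" "z = ghist n m bs" "run n m bs = Sold W q"
    using calculation(1) terminal_Gstar_iff by blast
  ultimately show "outc (Gstar n m) z = second_price n \<theta>"
    using outcome_eq_second_price outc_Gstar_ghist by simp
qed

lemma gradual_Gstar: "gradual (\<lambda>_. {1..m}) {1..n} (Gstar n m)"
  unfolding gradual_def
proof (intro ballI)
  fix i h assume i: "i \<in> {1..n}" and h: "h \<in> dnodes (Gstar n m) i"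
  consider "h = []" | bs p A ys off where "gvalid n m bs" "h = ghist n m bs"
     "run n m bs = Level p A ys off" "i = A ! length ys"
    using h dnodes_Gstar_iff by blast
  then show "(\<forall>x\<in>avail (Gstar n m) i h. x \<noteq> {} \<and> x \<subseteq> {1..m}) \<and>
         (\<forall>x\<in>avail (Gstar n m) i h. \<forall>y\<in>avail (Gstar n m) i h. x \<noteq> y \<longrightarrow> x \<inter> y = {}) \<and>
         \<Union> (avail (Gstar n m) i h) = report (\<lambda>_. {1..m}) i h"
  proof cases
    case 1
    then show ?thesis using avail_Gstar_Nil[OF i] two_prices by (simp add: report_Nil)
  next
    case 2
    have I: "level_inv bs p A ys off" using level_inv_run[OF 2(1,3)] .
    then have "bid_report i bs = {p..m}" "1 \<le> p" "p < m" using 2(4) by (auto simp: level_inv_def)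
    moreover have "avail (Gstar n m) i h = {{p<..m}, {p}}" using avail_Gstar_Level[OF 2(1,3)] 2 by simp
    ultimately show ?thesis using 2(2) by auto
  qed
qed

section \<open>Plays of strategy profiles\<close>

definition profile :: "(nat \<Rightarrow> (nat, nat) history \<Rightarrow> nat set) \<Rightarrow> bool" where
  "profile s \<longleftrightarrow> (\<forall>j\<in>{1..n}. strategy (Gstar n m) j (s j))"

definition choice :: "(nat \<Rightarrow> (nat, nat) history \<Rightarrow> nat set) \<Rightarrow> bool list \<Rightarrow> bool" where
  "choice s bs = (case run n m bs of
      Level p A ys off \<Rightarrow> s (A ! length ys) (ghist n m bs) = {p<..m}
    | Sold _ _ \<Rightarrow> False)"

definition follows :: "(nat \<Rightarrow> (nat, nat) history \<Rightarrow> nat set) \<Rightarrow> bool list \<Rightarrow> bool" where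
  "follows s bs \<longleftrightarrow> gvalid n m bs \<and> (\<forall>k<length bs. bs ! k = choice s (take k bs))"

lemma strategy_Nil:
  assumes "strategy (Gstar n m) j sj" "j \<in> {1..n}"
  shows "sj [] = {1..m}"
proof -
  have "[] \<in> dnodes (Gstar n m) j" unfolding dnodes_Gstar_iff using assms(2) by blast
  then show ?thesis using assms avail_Gstar_Nil unfolding strategy_def by blast
qed

lemma strategy_Level:
  assumes "strategy (Gstar n m) (A ! length ys) sj" "gvalid n m bs" "run n m bs = Level p A ys off"
  shows "sj (ghist n m bs) \<in> {{p<..m}, {p}}"
proof -
  have "ghist n m bs \<in> dnodes (Gstar n m) (A ! length ys)"
    unfolding dnodes_Gstar_iff using assms(2,3) by blast
  then show ?thesis using assms avail_Gstar_Level unfolding strategy_def by blast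
qed

lemma mover_bidder:
  assumes "gvalid n m bs" "run n m bs = Level p A ys off"
  shows "A ! length ys \<in> {1..n}" and "p < m"
proof -
  have "length ys < length A" "set A \<subseteq> {1..n}" "p < m"
    using level_inv_run[OF assms] by (auto simp: level_inv_def)
  then show "A ! length ys \<in> {1..n}" and "p < m" using nth_mem by blast+
qed

lemma follows_choice:
  assumes s: "profile s" and v: "gvalid n m (take k bs)" and L: "run n m (take k bs) = Level p A ys off"
  shows "bs ! k = choice s (take k bs) \<longleftrightarrow>
    stay_or_leave m p (bs ! k) = s (A ! length ys) (ghist n m (take k bs))"
proof -
  have "A ! length ys \<in> {1..n}" using mover_bidder[OF v L] by simp
  then have "s (A ! length ys) (ghist n m (take k bs)) \<in> {{p<..m}, {p}}"
    using strategy_Level[OF _ v L] s by (auto simp: profile_def)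
  then show ?thesis by (simp add: stay_or_leave_eq_iff choice_def L)
qed

lemma ghist_nth_Suc_eq_profile_move_iff:
  assumes s: "profile s" and v: "gvalid n m bs" and k: "k < length bs"
  shows "ghist n m bs ! Suc k = profile_move (Gstar n m) s (take (Suc k) (ghist n m bs)) \<longleftrightarrow>
    bs ! k = choice s (take k bs)"
proof -
  have vk: "gvalid n m (take k bs)" using gvalid_take[OF v] .
  obtain p A ys off where L: "run n m (take k bs) = Level p A ys off"
    using in_level_run_take[OF v k] by (cases "run n m (take k bs)") (auto simp: in_level_def)
  have "ghist n m bs ! Suc k = (\<lambda>j. if j = A ! length ys then Some (stay_or_leave m p (bs ! k)) else None)"
    using k by (simp add: ghist_nth_Suc gmove_eq_next_move next_move_Level[OF L])
  moreover have "take (Suc k) (ghist n m bs) = ghist n m (take k bs)" using take_Suc_ghist k by simp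
  ultimately show ?thesis
    using active_Gstar_Level[OF vk L] follows_choice[OF s vk L]
    by (auto simp: profile_move_def fun_eq_iff)
qed

lemma consistent_Gstar_iff:
  assumes s: "profile s" and v: "gvalid n m bs"
  shows "consistent (Gstar n m) s (ghist n m bs) \<longleftrightarrow> follows s bs"
proof -
  have "\<forall>j\<in>{1..n}. s j [] = {1..m}" using strategy_Nil s unfolding profile_def by blast
  then have "ghist n m bs ! 0 = profile_move (Gstar n m) s (take 0 (ghist n m bs))"
    by (auto simp: active_Gstar_Nil ginit_def profile_move_def fun_eq_iff)
  then have "consistent (Gstar n m) s (ghist n m bs) \<longleftrightarrow>
    (\<forall>k<length bs. ghist n m bs ! Suc k = profile_move (Gstar n m) s (take (Suc k) (ghist n m bs)))"
    unfolding consistent_iff_profile_move length_ghist All_less_Suc2 by simp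
  then show ?thesis
    using ghist_nth_Suc_eq_profile_move_iff[OF s v] v by (simp add: follows_def)
qed

lemma first_divergence:
  assumes v1: "gvalid n m bs1" and v2: "gvalid n m bs2"
    and f1: "\<not> in_level (run n m bs1)" and f2: "\<not> in_level (run n m bs2)" and ne: "bs1 \<noteq> bs2"
  obtains k where "k < length bs1" "k < length bs2" "take k bs1 = take k bs2" "bs1 ! k \<noteq> bs2 ! k"
proof (cases "\<exists>k. k < length bs1 \<and> k < length bs2 \<and> bs1 ! k \<noteq> bs2 ! k")
  case True
  define k where "k = (LEAST k. k < length bs1 \<and> k < length bs2 \<and> bs1 ! k \<noteq> bs2 ! k)"
  have P: "k < length bs1" "k < length bs2" "bs1 ! k \<noteq> bs2 ! k"
    using LeastI_ex[OF True] unfolding k_def by blast+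
  have "bs1 ! j = bs2 ! j" if "j < k" for j
    using not_less_Least[OF that[unfolded k_def]] P that by auto
  then have "take k bs1 = take k bs2" using P by (intro nth_equalityI) auto
  then show ?thesis using that P by blast
next
  case False
  then have common: "k < length bs1 \<Longrightarrow> k < length bs2 \<Longrightarrow> bs1 ! k = bs2 ! k" for k by blast
  consider "length bs1 < length bs2" | "length bs2 < length bs1" | "length bs1 = length bs2" by linarith
  then show ?thesis
  proof cases
    case 1
    then have "take (length bs1) bs2 = bs1" using common by (intro nth_equalityI) auto
    then show ?thesis using in_level_run_take[OF v2 1] f1 by simp
  next
    case 2
    then have "take (length bs2) bs1 = bs2" using common by (intro nth_equalityI) auto
    then show ?thesis using in_level_run_take[OF v1 2] f2 by simp
  next
    case 3
    then show ?thesis using common ne by (auto intro: nth_equalityI)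
  qed
qed

lemma follows_unique:
  assumes "follows s bs1" "follows s bs2"
    and "\<not> in_level (run n m bs1)" "\<not> in_level (run n m bs2)"
  shows "bs1 = bs2"
proof (rule ccontr)
  assume "bs1 \<noteq> bs2"
  moreover have "gvalid n m bs1" "gvalid n m bs2" using assms(1,2) by (simp_all add: follows_def)
  ultimately obtain k where "k < length bs1" "k < length bs2" "take k bs1 = take k bs2" "bs1 ! k \<noteq> bs2 ! k"
    using first_divergence assms(3,4) by blast
  then show False using assms(1,2) by (simp add: follows_def)
qed

lemma follows_exists: "\<exists>bs. follows s bs \<and> \<not> in_level (run n m bs)"
proof -
  have "\<exists>bs. follows s bs \<and> (\<not> in_level (run n m bs) \<or> length bs = N)" for N
  proof (induction N)
    case 0
    have "follows s []" by (simp add: follows_def)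
    then show ?case by blast
  next
    case (Suc N)
    then obtain bs where c: "follows s bs" and o: "\<not> in_level (run n m bs) \<or> length bs = N" by blast
    show ?case
    proof (cases "in_level (run n m bs)")
      case True
      have "gvalid n m (bs @ [choice s bs])" using c True gvalid_snoc by (simp add: follows_def)
      moreover have "\<forall>k<length (bs @ [choice s bs]). (bs @ [choice s bs]) ! k = choice s (take k (bs @ [choice s bs]))"
        using c by (auto simp: follows_def nth_append less_Suc_eq)
      ultimately have "follows s (bs @ [choice s bs])" by (simp add: follows_def)
      then show ?thesis using o True by auto
    qed (use c in blast)
  qed
  from this[of "Suc (m * n)"] obtain bs where c: "follows s bs"
    and o: "\<not> in_level (run n m bs) \<or> length bs = Suc (m * n)" by blast
  have "length bs \<le> m * n" using length_le_if_gvalid c by (simp add: follows_def)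
  then show ?thesis using c o by auto
qed

lemma play_Gstar_eq:
  assumes s: "profile s" and c: "follows s bs" and F: "run n m bs = Sold W q"
  shows "play (Gstar n m) s = (W, q)"
proof -
  have v: "gvalid n m bs" using c by (simp add: follows_def)
  have "(THE z. terminal (Gstar n m) z \<and> consistent (Gstar n m) s z) = ghist n m bs"
  proof (rule the_equality)
    show "terminal (Gstar n m) (ghist n m bs) \<and> consistent (Gstar n m) s (ghist n m bs)"
      using terminal_Gstar_iff v F consistent_Gstar_iff[OF s v] c by blast
  next
    fix z assume z: "terminal (Gstar n m) z \<and> consistent (Gstar n m) s z"
    then obtain bs' W' q' where v': "gvalid n m bs'" and e: "z = ghist n m bs'"
      and F': "run n m bs' = Sold W' q'"
      using terminal_Gstar_iff by blast
    have "follows s bs'" using z e consistent_Gstar_iff[OF s v'] by simp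
    then have "bs' = bs" using follows_unique[OF _ c] F F' by (simp add: in_level_def)
    then show "z = ghist n m bs" using e by simp
  qed
  then show ?thesis unfolding play_def using outc_Gstar_ghist[OF v F] by simp
qed

lemma play_Gstar:
  assumes "profile s"
  obtains bs W q where "follows s bs" "run n m bs = Sold W q" "play (Gstar n m) s = (W, q)"
proof -
  obtain bs where "follows s bs" "\<not> in_level (run n m bs)" using follows_exists by blast
  moreover from this obtain W q where "run n m bs = Sold W q"
    by (cases "run n m bs") (auto simp: in_level_def)
  ultimately show ?thesis using that play_Gstar_eq[OF assms] by blast
qed

section \<open>Incentive compatibility\<close>

lemma bid_report_take_Suc:
  assumes k: "k < length bs" and L: "run n m (take k bs) = Level p A ys off"
  shows "bid_report j (take (Suc k) bs) =
    (if j = A ! length ys then stay_or_leave m p (bs ! k) else bid_report j (take k bs))"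
  using bid_report_snoc[OF L, of j "bs ! k"] k by (simp add: take_Suc_conv_app_nth)

lemma bid_report_Level_subset:
  assumes v: "gvalid n m bs" and L: "run n m bs = Level p A ys off" and j: "j \<in> set A"
  shows "bid_report j bs \<subseteq> {p..m}"
proof -
  obtain k where "k < length A" "j = A ! k" using j by (auto simp: in_set_conv_nth)
  then show ?thesis using level_inv_run[OF v L] by (auto simp: level_inv_def stay_or_leave_def)
qed

lemma bid_report_antimono:
  assumes v: "gvalid n m bs" and "k \<le> k'" "k' \<le> length bs"
  shows "bid_report j (take k' bs) \<subseteq> bid_report j (take k bs)"
  using assms(2,3)
proof (induction k' rule: dec_induct)
  case (step x)
  then have x: "x < length bs" by simp
  obtain p A ys off where L: "run n m (take x bs) = Level p A ys off"
    using in_level_run_take[OF v x] by (cases "run n m (take x bs)") (auto simp: in_level_def)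
  have "bid_report j (take (Suc x) bs) \<subseteq> bid_report j (take x bs)"
  proof (cases "j = A ! length ys")
    case True
    have I: "level_inv (take x bs) p A ys off" using level_inv_run[OF gvalid_take[OF v] L] .
    then have "length ys < length A" "p < m" unfolding level_inv_def by blast+
    then have "bid_report j (take x bs) = {p..m}" using I True by (auto simp: level_inv_def)
    then show ?thesis
      using bid_report_take_Suc[OF x L] True \<open>p < m\<close> by (auto simp: stay_or_leave_def)
  next
    case False
    then show ?thesis using bid_report_take_Suc[OF x L] by simp
  qed
  then show ?case using step by auto
qed simp

lemma bid_report_not_empty: "gvalid n m bs \<Longrightarrow> bid_report j bs \<noteq> {}"
proof (induction bs rule: rev_induct)
  case Nil
  then show ?case using two_prices by (simp only: report_ghist_Nil) simp
next
  case (snoc b bs)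
  then have v: "gvalid n m bs" "in_level (run n m bs)" using gvalid_snoc by auto
  then obtain p A ys off where L: "run n m bs = Level p A ys off"
    by (cases "run n m bs") (auto simp: in_level_def)
  have "p < m" using level_inv_run[OF v(1) L] by (simp add: level_inv_def)
  then show ?case using bid_report_snoc[OF L, of j b] snoc.IH[OF v(1)] by (auto simp: stay_or_leave_def)
qed

lemma level_within_finished_run:
  assumes v: "gvalid n m bs" and k: "k \<le> length bs"
    and L: "run n m (take k bs) = Level p A ys off" and F: "\<not> in_level (run n m bs)"
  shows "off + length A \<le> length bs"
    and "\<And>k'. off \<le> k' \<Longrightarrow> k' < off + length A \<Longrightarrow>
      run n m (take k' bs) = Level p A (take (k' - off) (drop off bs)) off"
    and "off + length ys = k" and "run n m (take off bs) = Level p A [] off"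
proof -
  have I: "level_inv (take k bs) p A ys off" using level_inv_run[OF gvalid_take[OF v] L] .
  then show ok: "off + length ys = k" using k by (auto simp: level_inv_def)
  show t0: "run n m (take off bs) = Level p A [] off" using I ok by (auto simp: level_inv_def min_def)
  have gen: "run n m (take k' bs) = Level p A (take (k' - off) (drop off bs)) off"
    if "off \<le> k'" "k' < off + length A" "k' \<le> length bs" for k'
  proof -
    have "take k' bs = take off bs @ take (k' - off) (drop off bs)"
      using that by (metis le_add_diff_inverse take_add)
    then have "run n m (take k' bs) =
        foldl (level_step m) (Level p A [] off) (take (k' - off) (drop off bs))"
      using t0 by (simp add: run_append)
    also have "\<dots> = Level p A (take (k' - off) (drop off bs)) off"
      using that by (subst foldl_level_step_within_level) auto
    finally show ?thesis .
  qed
  show le: "off + length A \<le> length bs"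
  proof (rule ccontr)
    assume "\<not> off + length A \<le> length bs"
    then have "run n m (take (length bs) bs) = Level p A (take (length bs - off) (drop off bs)) off"
      using gen[of "length bs"] ok k by simp
    then show False using F by (simp add: in_level_def)
  qed
  show "\<And>k'. off \<le> k' \<Longrightarrow> k' < off + length A \<Longrightarrow>
      run n m (take k' bs) = Level p A (take (k' - off) (drop off bs)) off"
    using gen le by simp
qed

lemma reports_realize_outcome:
  assumes v: "gvalid n m bs" and F: "run n m bs = Sold W q" and x: "x \<in> bid_report i bs"
  obtains \<theta> where "\<theta> i = x" "\<forall>j\<in>{1..n}. \<theta> j \<in> bid_report j bs" "(W, q) = second_price n \<theta>"
proof -
  define \<theta> where "\<theta> = (\<lambda>j. if j = i then x else (SOME y. y \<in> bid_report j bs))"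
  have reports: "\<forall>j\<in>{1..n}. \<theta> j \<in> bid_report j bs"
    using x bid_report_not_empty[OF v] by (auto simp: \<theta>_def some_in_eq)
  show ?thesis
  proof (rule that)
    show "\<theta> i = x" by (simp add: \<theta>_def)
    show "\<forall>j\<in>{1..n}. \<theta> j \<in> bid_report j bs" by (rule reports)
    show "(W, q) = second_price n \<theta>" using outcome_eq_second_price[OF v F reports] .
  qed
qed

lemma sold_price_ge_level:
  assumes v: "gvalid n m bs" and F: "run n m bs = Sold W q"
    and k: "k \<le> length bs" and L: "run n m (take k bs) = Level p A ys off"
  shows "p \<le> q"
proof -
  obtain x where x: "x \<in> bid_report 1 bs" using bid_report_not_empty[OF v] by blast
  obtain \<theta> where "\<theta> 1 = x" and \<theta>: "\<forall>j\<in>{1..n}. \<theta> j \<in> bid_report j bs" "(W, q) = second_price n \<theta>"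
    by (rule reports_realize_outcome[OF v F x])
  have I: "level_inv (take k bs) p A ys off" using level_inv_run[OF gvalid_take[OF v] L] .
  then have A: "distinct A" "set A \<subseteq> {1..n}" "0 < length A" "1 < length A"
    by (auto simp: level_inv_def)
  have "p \<le> \<theta> j" if j: "j \<in> set A" for j
  proof -
    have "bid_report j bs \<subseteq> bid_report j (take k bs)"
      using bid_report_antimono[OF v k, of j] by simp
    also have "\<dots> \<subseteq> {p..m}" using bid_report_Level_subset[OF gvalid_take[OF v] L j] .
    finally have "bid_report j bs \<subseteq> {p..m}" .
    moreover have "j \<in> {1..n}" using j A(2) by blast
    ultimately show ?thesis using \<theta>(1) by fastforce
  qed
  moreover have "A ! 0 \<in> set A" "A ! 1 \<in> set A" "A ! 0 \<noteq> A ! 1"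
    using A(3,4) nth_eq_iff_index_eq[OF A(1)] by auto
  ultimately have "p \<le> snd (second_price n \<theta>)"
    using second_price_ge[of "A ! 0" n "A ! 1" p \<theta>] A(2) by blast
  then show ?thesis using \<theta>(2) by (metis snd_conv)
qed

text \<open>If the mover of a level leaves and still wins, then her value, read off from the
  reports, is the price of the level and the highest value; so nobody else at this
  level can have stayed.\<close>
lemma winning_leaver_level_all_leave:
  assumes v: "gvalid n m bs" and F: "run n m bs = Sold W q"
    and k: "k < length bs" and L: "run n m (take k bs) = Level p A ys off"
    and leave: "\<not> bs ! k" and win: "pmf W (A ! length ys) \<noteq> 0"
    and r: "off \<le> r" "r < off + length A"
  shows "\<not> bs ! r"
proof
  assume stay: "bs ! r"
  have Fin: "\<not> in_level (run n m bs)" using F by (simp add: in_level_def)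
  note level = level_within_finished_run[OF v less_imp_le[OF k] L Fin]
  have I: "level_inv (take k bs) p A ys off" using level_inv_run[OF gvalid_take[OF v] L] .
  then have A: "set A \<subseteq> {1..n}" "length ys < length A" by (auto simp: level_inv_def)
  obtain x where x: "x \<in> bid_report 1 bs" using bid_report_not_empty[OF v] by blast
  obtain \<theta> where "\<theta> 1 = x" and \<theta>: "\<forall>j\<in>{1..n}. \<theta> j \<in> bid_report j bs" "(W, q) = second_price n \<theta>"
    by (rule reports_realize_outcome[OF v F x])
  have "A ! (r - off) \<in> set A" using r by simp
  then have other: "A ! (r - off) \<in> {1..n}" using A(1) by blast
  have "\<theta> (A ! length ys) = Max (\<theta> ` {1..n})"
    using second_price_winner[OF two_bidders] win \<theta>(2) by (metis fst_conv)
  moreover have "\<theta> (A ! length ys) = p"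
  proof -
    have "bid_report (A ! length ys) bs \<subseteq> bid_report (A ! length ys) (take (Suc k) bs)"
      using bid_report_antimono[OF v, of "Suc k" "length bs"] k by simp
    also have "\<dots> = {p}" using bid_report_take_Suc[OF k L] leave by (simp add: stay_or_leave_def)
    finally show ?thesis using \<theta>(1) A nth_mem by blast
  qed
  moreover have "p < \<theta> (A ! (r - off))"
  proof -
    have rb: "r < length bs" using level(1) r by simp
    have "run n m (take r bs) = Level p A (take (r - off) (drop off bs)) off" using level(2) r k by simp
    moreover have "length (take (r - off) (drop off bs)) = r - off" using rb r by simp
    ultimately have "bid_report (A ! (r - off)) (take (Suc r) bs) = {p<..m}"
      using bid_report_take_Suc[OF rb] stay by (simp add: stay_or_leave_def)
    moreover have "bid_report (A ! (r - off)) bs \<subseteq> bid_report (A ! (r - off)) (take (Suc r) bs)"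
      using bid_report_antimono[OF v, of "Suc r" "length bs"] rb by simp
    ultimately show ?thesis using \<theta>(1) other by fastforce
  qed
  moreover have "\<theta> (A ! (r - off)) \<le> Max (\<theta> ` {1..n})" using other by (intro Max_ge) auto
  ultimately show False by linarith
qed

lemma unconditional_keeps_value:
  assumes t: "profile t" and c: "follows t bt" and v: "v \<in> {1..m}"
    and u: "unconditional (\<lambda>_. {1..m}) (Gstar n m) i v (t i)" and k: "k \<le> length bt"
  shows "v \<in> bid_report i (take k bt)"
  using k
proof (induction k)
  case 0
  then show ?case using v by (simp only: take_0 report_ghist_Nil)
next
  case (Suc k)
  then have k: "k < length bt" and IH: "v \<in> bid_report i (take k bt)" by simp_all
  have vk: "gvalid n m (take k bt)" using c gvalid_take by (simp add: follows_def)
  obtain p A ys off where L: "run n m (take k bt) = Level p A ys off"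
    using c in_level_run_take[OF _ k] by (cases "run n m (take k bt)") (auto simp: in_level_def follows_def)
  show ?case
  proof (cases "i = A ! length ys")
    case True
    have "ghist n m (take k bt) \<in> dnodes (Gstar n m) i"
      unfolding dnodes_Gstar_iff using vk L True by blast
    then have "v \<in> t i (ghist n m (take k bt))" using u IH unfolding unconditional_def by blast
    moreover have "stay_or_leave m p (bt ! k) = t i (ghist n m (take k bt))"
      using c k follows_choice[OF t vk L] True by (simp add: follows_def)
    ultimately show ?thesis using bid_report_take_Suc[OF k L, of i] True by simp
  qed (use bid_report_take_Suc[OF k L, of i] IH in simp)
qed

lemma truthful_stays_iff:
  assumes c: "follows t bt" and keep: "\<forall>k\<le>length bt. v \<in> bid_report i (take k bt)"
    and k: "k < length bt" and L: "run n m (take k bt) = Level p A ys off" and i: "A ! length ys = i"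
  shows "bt ! k \<longleftrightarrow> p < v"
proof -
  have "level_inv (take k bt) p A ys off"
    using level_inv_run[OF _ L] c gvalid_take by (simp add: follows_def)
  then have "bid_report i (take k bt) = {p..m}" using i by (auto simp: level_inv_def)
  moreover have "bid_report i (take (Suc k) bt) = stay_or_leave m p (bt ! k)"
    using bid_report_take_Suc[OF k L, of i] i by simp
  moreover have "v \<in> bid_report i (take k bt)" "v \<in> bid_report i (take (Suc k) bt)"
    using keep k by auto
  ultimately show ?thesis by (cases "bt ! k") (auto simp: stay_or_leave_def)
qed

lemma divergence_mover:
  assumes "follows t bt" "follows d bd" and agree: "\<forall>j. j \<noteq> i \<longrightarrow> t j = d j"
    and "k < length bt" "k < length bd" "take k bt = take k bd" "bt ! k \<noteq> bd ! k"
    and L: "run n m (take k bt) = Level p A ys off"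
  shows "A ! length ys = i"
proof (rule ccontr)
  assume "A ! length ys \<noteq> i"
  then have "choice t (take k bt) = choice d (take k bd)"
    using agree assms(6) L by (simp add: choice_def)
  then show False using assms(1,2,4,5,7) by (simp add: follows_def)
qed

lemma info_Gstar_few_stayers:
  assumes v: "gvalid n m bs" and v': "gvalid n m bs'"
    and L: "run n m bs = Level p A ys off" and L': "run n m bs' = Level p A ys' off"
    and len: "length ys' = length ys" and pre: "take off bs' = take off bs"
    and few: "nstay ys \<le> 1" and few': "nstay ys' \<le> 1"
  shows "ghist n m bs' \<in> info (Gstar n m) (A ! length ys) (ghist n m bs)"
proof -
  have "ys = drop off bs" "ys' = drop off bs'"
    using level_inv_run[OF v L] level_inv_run[OF v' L'] by (simp_all add: level_inv_def)
  then have "bs' \<in> info_runs bs (A ! length ys) p off"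
    using v' L' len pre few few' by (simp add: info_runs_def gst_eq_as_gstate_run)
  then show ?thesis using info_Gstar_ghist[OF v L] by simp
qed

text \<open>The crux of incentive compatibility: a bidder who moves later at the same price
  level, after at most one earlier mover has stayed, cannot tell the two runs apart, so
  she chooses alike in both.\<close>
lemma later_mover_copies:
  assumes t: "profile t" and d: "profile d" and agree: "\<forall>j. j \<noteq> A ! length ys \<longrightarrow> t j = d j"
    and ct: "follows t bt" and cd: "follows d bd"
    and ft: "\<not> in_level (run n m bt)" and fd: "\<not> in_level (run n m bd)"
    and k0: "k0 < length bt" "k0 < length bd" and pre: "take k0 bt = take k0 bd"
    and L: "run n m (take k0 bt) = Level p A ys off"
    and k': "k0 < k'" "k' < off + length A"
    and quiet: "\<forall>r. off \<le> r \<longrightarrow> r < k' \<longrightarrow> \<not> bd ! r"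
    and alone: "\<forall>r. off \<le> r \<longrightarrow> r < k' \<longrightarrow> bt ! r \<longrightarrow> r = k0"
  shows "bt ! k' = bd ! k'"
proof -
  have vt: "gvalid n m bt" and vd: "gvalid n m bd" using ct cd by (simp_all add: follows_def)
  have Ld: "run n m (take k0 bd) = Level p A ys off" using L pre by simp
  note lt = level_within_finished_run[OF vt less_imp_le[OF k0(1)] L ft]
  note ld = level_within_finished_run[OF vd less_imp_le[OF k0(2)] Ld fd]
  have I: "level_inv (take k0 bt) p A ys off" using level_inv_run[OF gvalid_take[OF vt] L] .
  then have A: "distinct A" "length ys < length A" "set A \<subseteq> {1..n}" by (auto simp: level_inv_def)
  have off: "off \<le> k'" "off \<le> k0" using k' lt(3) by auto
  define j where "j = A ! (k' - off)"
  have kA: "k' - off < length A" and "k' - off \<noteq> length ys" using k' lt(3) by auto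
  then have "j \<noteq> A ! length ys" unfolding j_def using nth_eq_iff_index_eq[OF A(1) kA A(2)] by simp
  moreover have "j \<in> {1..n}" unfolding j_def using nth_mem[OF kA] A(3) by blast
  ultimately have j: "j \<noteq> A ! length ys" "j \<in> {1..n}" .
  define Yt Yd where "Yt = take (k' - off) (drop off bt)" and "Yd = take (k' - off) (drop off bd)"
  have kt: "k' < length bt" and kd: "k' < length bd" using k' lt(1) ld(1) by auto
  have Lt': "run n m (take k' bt) = Level p A Yt off" unfolding Yt_def using lt(2)[OF off(1) k'(2)] .
  have Ld': "run n m (take k' bd) = Level p A Yd off" unfolding Yd_def using ld(2)[OF off(1) k'(2)] .
  have lY: "length Yt = k' - off" "length Yd = k' - off" using kt kd off by (simp_all add: Yt_def Yd_def)
  have vkt: "gvalid n m (take k' bt)" and vkd: "gvalid n m (take k' bd)"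
    using gvalid_take vt vd by auto
  have "take off bt = take off bd" using arg_cong[OF pre, of "take off"] off(2) by (simp add: min_def)
  then have "take off (take k' bt) = take off (take k' bd)" using off(1) by (simp add: min_def)
  moreover have "nstay Yd = 0"
  proof (rule nstay_eq_0, intro allI impI)
    fix r assume "r < length Yd"
    then have "Yd ! r = bd ! (off + r)" "off + r < k'" using lY kd by (simp_all add: Yd_def)
    then show "\<not> Yd ! r" using quiet by simp
  qed
  moreover have "nstay Yt \<le> 1"
  proof (rule nstay_le_1[of _ "k0 - off"], intro allI impI)
    fix r assume "r < length Yt" "Yt ! r"
    then have "bt ! (off + r)" "off + r < k'" using lY kt by (simp_all add: Yt_def)
    then have "off + r = k0" using alone[rule_format, of "off + r"] by simp
    then show "r = k0 - off" by simp
  qed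
  ultimately have "ghist n m (take k' bt) \<in> info (Gstar n m) j (ghist n m (take k' bd))"
    using info_Gstar_few_stayers[OF vkd vkt Ld' Lt'] lY j_def by simp
  moreover have "ghist n m (take k' bd) \<in> dnodes (Gstar n m) j"
    unfolding dnodes_Gstar_iff using vkd Ld' lY j_def by auto
  ultimately have "d j (ghist n m (take k' bt)) = d j (ghist n m (take k' bd))"
    using d j(2) unfolding profile_def strategy_def by blast
  then have "choice t (take k' bt) = choice d (take k' bd)"
    using Lt' Ld' lY agree j unfolding j_def by (simp add: choice_def)
  then show ?thesis using ct cd kt kd by (simp add: follows_def)
qed

lemma truthful_alone_stays:
  assumes t: "profile t" and d: "profile d" and agree: "\<forall>j. j \<noteq> A ! length ys \<longrightarrow> t j = d j"
    and ct: "follows t bt" and cd: "follows d bd"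
    and ft: "\<not> in_level (run n m bt)" and fd: "\<not> in_level (run n m bd)"
    and k0: "k0 < length bt" "k0 < length bd" and pre: "take k0 bt = take k0 bd"
    and L: "run n m (take k0 bt) = Level p A ys off"
    and stays: "bt ! k0" and quiet: "\<forall>r. off \<le> r \<longrightarrow> r < off + length A \<longrightarrow> \<not> bd ! r"
  shows "off \<le> r \<Longrightarrow> r < off + length A \<Longrightarrow> bt ! r \<longleftrightarrow> r = k0"
proof (induction r rule: less_induct)
  case (less r)
  consider "r < k0" | "r = k0" | "k0 < r" by linarith
  then show ?case
  proof cases
    case 1
    then have "bt ! r = bd ! r" using pre by (metis nth_take)
    then show ?thesis using quiet less.prems 1 by simp
  next
    case 2
    then show ?thesis using stays by simp
  next
    case 3
    have "\<forall>r'. off \<le> r' \<longrightarrow> r' < r \<longrightarrow> bt ! r' \<longrightarrow> r' = k0" using less.IH less.prems by auto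
    then have "bt ! r = bd ! r"
      using later_mover_copies[OF t d agree ct cd ft fd k0 pre L 3 less.prems(2)] quiet less.prems
      by simp
    then show ?thesis using quiet less.prems 3 by simp
  qed
qed

lemma lone_stayer_wins:
  assumes v: "gvalid n m bt" and ft: "\<not> in_level (run n m bt)"
    and k0: "k0 < length bt" and L: "run n m (take k0 bt) = Level p A ys off"
    and alone: "\<forall>r. off \<le> r \<longrightarrow> r < off + length A \<longrightarrow> (bt ! r \<longleftrightarrow> r = k0)"
  shows "run n m bt = Sold (return_pmf (A ! length ys)) p"
proof -
  note level = level_within_finished_run[OF v less_imp_le[OF k0] L ft]
  have I: "level_inv (take k0 bt) p A ys off" using level_inv_run[OF gvalid_take[OF v] L] .
  then have A: "length ys < length A" "2 \<le> length A" by (auto simp: level_inv_def)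
  define Y where "Y = take (length A) (drop off bt)"
  have lY: "length Y = length A" using level(1) by (simp add: Y_def)
  have "Y ! r \<longleftrightarrow> r = length ys" if "r < length Y" for r
    using that lY alone[rule_format, of "off + r"] level(1,3) by (auto simp: Y_def)
  then have stayers: "map fst (filter snd (zip A Y)) = [A ! length ys]"
    using stayers_single[OF lY A(1)] by blast
  have "Y \<noteq> []" using lY A(2) by auto
  have "run n m (take (off + length A) bt) = foldl (level_step m) (Level p A [] off) Y"
    using level(4) by (simp add: Y_def take_add run_append)
  also have "\<dots> = level_step m (foldl (level_step m) (Level p A [] off) (butlast Y)) (last Y)"
    using \<open>Y \<noteq> []\<close> by (metis append_butlast_last_id foldl_Cons foldl_Nil foldl_append)
  also have "\<dots> = level_step m (Level p A (butlast Y) off) (last Y)"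
    using lY \<open>Y \<noteq> []\<close> A(2) by (subst foldl_level_step_within_level) auto
  also have "\<dots> = Sold (return_pmf (A ! length ys)) p"
    using lY \<open>Y \<noteq> []\<close> stayers by (simp add: Let_def append_butlast_last_id)
  finally have sold: "run n m (take (off + length A) bt) = Sold (return_pmf (A ! length ys)) p" .
  moreover have "off + length A = length bt"
  proof (rule ccontr)
    assume "off + length A \<noteq> length bt"
    then have "in_level (run n m (take (off + length A) bt))"
      using level(1) in_level_run_take[OF v] by simp
    then show False using sold by (simp add: in_level_def)
  qed
  ultimately show ?thesis by simp
qed

lemma deviation_payoff_le:
  assumes t: "profile t" and d: "profile d" and agree: "\<forall>j. j \<noteq> i \<longrightarrow> t j = d j"
    and ct: "follows t bt" and Ft: "run n m bt = Sold Wt qt"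
    and cd: "follows d bd" and Fd: "run n m bd = Sold Wd qd"
    and keep: "\<forall>k\<le>length bt. v \<in> bid_report i (take k bt)" and ut: "0 \<le> payoff i v (Wt, qt)"
    and ne: "bt \<noteq> bd"
  shows "payoff i v (Wd, qd) \<le> payoff i v (Wt, qt)"
proof -
  have vt: "gvalid n m bt" and vd: "gvalid n m bd" using ct cd by (simp_all add: follows_def)
  have ft: "\<not> in_level (run n m bt)" and fd: "\<not> in_level (run n m bd)"
    using Ft Fd by (simp_all add: in_level_def)
  obtain k0 where k0: "k0 < length bt" "k0 < length bd" and pre: "take k0 bt = take k0 bd"
    and diff: "bt ! k0 \<noteq> bd ! k0"
    using first_divergence[OF vt vd ft fd ne] by blast
  obtain p A ys off where L: "run n m (take k0 bt) = Level p A ys off"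
    using in_level_run_take[OF vt k0(1)] by (cases "run n m (take k0 bt)") (auto simp: in_level_def)
  have Ld: "run n m (take k0 bd) = Level p A ys off" using L pre by simp
  have mover: "A ! length ys = i" using divergence_mover[OF ct cd agree k0 pre diff L] .
  have "p \<le> qd" using sold_price_ge_level[OF vd Fd less_imp_le[OF k0(2)] Ld] .
  have truthful: "bt ! k0 \<longleftrightarrow> p < v" using truthful_stays_iff[OF ct keep k0(1) L mover] .
  show ?thesis
  proof (cases "p < v \<and> pmf Wd i \<noteq> 0")
    case True
    then have quiet: "\<forall>r. off \<le> r \<longrightarrow> r < off + length A \<longrightarrow> \<not> bd ! r"
      using winning_leaver_level_all_leave[OF vd Fd k0(2) Ld] mover diff truthful by auto
    have "\<forall>r. off \<le> r \<longrightarrow> r < off + length A \<longrightarrow> (bt ! r \<longleftrightarrow> r = k0)"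
      using truthful_alone_stays[OF t d agree[folded mover] ct cd ft fd k0 pre L _ quiet] truthful True
      by blast
    then have "Wt = return_pmf i" "qt = p"
      using lone_stayer_wins[OF vt ft k0(1) L] Ft mover by simp_all
    moreover have "pmf Wd i * (real v - real qd) \<le> pmf Wd i * (real v - real p)"
      using \<open>p \<le> qd\<close> by (intro mult_left_mono) auto
    moreover have "\<dots> \<le> 1 * (real v - real p)"
      using True pmf_le_1 by (intro mult_right_mono) auto
    ultimately show ?thesis by (simp add: payoff_def)
  next
    case False
    then have "payoff i v (Wd, qd) \<le> 0"
      using \<open>p \<le> qd\<close> by (auto simp: payoff_def mult_nonneg_nonpos)
    then show ?thesis using ut by simp
  qed
qed

lemma truthful_dominant:
  assumes i: "i \<in> {1..n}" and v: "v \<in> {1..m}"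
    and s\<theta>: "strategy (Gstar n m) i s\<theta>" and u: "unconditional (\<lambda>_. {1..m}) (Gstar n m) i v s\<theta>"
    and si: "strategy (Gstar n m) i si" and s: "\<forall>j\<in>{1..n}. strategy (Gstar n m) j (s j)"
  shows "payoff i v (play (Gstar n m) (s(i := si))) \<le> payoff i v (play (Gstar n m) (s(i := s\<theta>)))"
proof -
  define t d where "t = s(i := s\<theta>)" and "d = s(i := si)"
  have t: "profile t" and d: "profile d" using s s\<theta> si by (auto simp: profile_def t_def d_def)
  obtain bt Wt qt where ct: "follows t bt" and Ft: "run n m bt = Sold Wt qt"
    and pt: "play (Gstar n m) t = (Wt, qt)" using play_Gstar[OF t] by blast
  obtain bd Wd qd where cd: "follows d bd" and Fd: "run n m bd = Sold Wd qd"
    and pd: "play (Gstar n m) d = (Wd, qd)" using play_Gstar[OF d] by blast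
  have keep: "\<forall>k\<le>length bt. v \<in> bid_report i (take k bt)"
    using unconditional_keeps_value[OF t ct v] u by (simp add: t_def)
  then obtain \<theta> where "\<theta> i = v" "(Wt, qt) = second_price n \<theta>"
    using reports_realize_outcome[OF _ Ft, of v i] ct by (metis follows_def order_refl take_all)
  then have "0 \<le> payoff i v (Wt, qt)" using second_price_payoff_nonneg[OF two_bidders] by metis
  then have "payoff i v (Wd, qd) \<le> payoff i v (Wt, qt)"
    using deviation_payoff_le[OF t d _ ct Ft cd Fd keep] Ft Fd by (cases "bt = bd") (auto simp: t_def d_def)
  then show ?thesis using pt pd by (simp add: t_def d_def)
qed

end

theorem proposition9:
  fixes n m :: nat
  assumes "n \<ge> 2" and "m \<ge> 2"
  shows "gradual_mechanism (\<lambda>_. {1..m}) {1..n} (second_price n) (Gstar n m) \<and>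
         incentive_compatible (\<lambda>_. {1..m}) {1..n} auction_pref (Gstar n m)"
proof -
  interpret ascending_auction n m using assms by unfold_locales
  show ?thesis
    unfolding gradual_mechanism_def incentive_compatible_def auction_pref_iff_payoff
    using extensive_form_Gstar gradual_Gstar implements_Gstar truthful_dominant by blast
qed

end
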